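(* Let $N>p\geq1$, $K\geq1$, and consider the model $\mathbf{Y}=\mathbf{U}\mathbf{S}+\mathbf{N}$, where $\mathbf{Y}\in\mathbb{R}^{N\times K}$ is observed, $\mathbf{U}\in\mathbb{R}^{N\times p}$ satisfies $\mathbf{U}^T\mathbf{U}=\mathbf{I}_p$, $\mathbf{S}\in\mathbb{R}^{p\times K}$, and, conditionally on $\mathbf{U},\mathbf{S}$, the columns of $\mathbf{N}$ are i.i.d. Gaussian with zero mean and known covariance $\sigma_n^2\mathbf{I}_N$. Assume the (improper) prior $\pi(\mathbf{S})\propto 1$ on $\mathbf{S}$ and the Bingham prior $\pi(\mathbf{U})\propto \mathrm{etr}(\kappa\,\mathbf{U}^T\bar{\mathbf{U}}\bar{\mathbf{U}}^T\mathbf{U})$ on $\mathbf{U}$ (with respect to the uniform measure on $\{\mathbf{U}:\mathbf{U}^T\mathbf{U}=\mathbf{I}_p\}$), where $\kappa>0$ and $\bar{\mathbf{U}}\in\mathbb{R}^{N\times p}$ satisfies $\bar{\mathbf{U}}^T\bar{\mathbf{U}}=\mathbf{I}_p$. Then the posterior distribution of $\mathbf{U}$ given $\mathbf{Y}$ is the Bingham distribution $p(\mathbf{U}\mid\mathbf{Y})\propto\mathrm{etr}\big(\mathbf{U}^T[\kappa\bar{\mathbf{U}}\bar{\mathbf{U}}^T+\tfrac{1}{2\sigma_n^2}\mathbf{Y}\mathbf{Y}^T]\mathbf{U}\big)$, and the MMSD estimator of $\mathbf{U}$, i.e. the matrix of $p$ orthonormal eigenvectors associated with the $p$ largest eigenvalues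 of $\int\mathbf{U}\mathbf{U}^Tp(\mathbf{U}\mid\mathbf{Y})\,d\mathbf{U}$, is given by the $p$ orthonormal eigenvectors associated with the $p$ largest eigenvalues of $\kappa\bar{\mathbf{U}}\bar{\mathbf{U}}^T+\frac{1}{2\sigma_n^2}\mathbf{Y}\mathbf{Y}^T$.
   Context: $\mathrm{etr}(\mathbf{X})=\exp(\mathrm{Tr}(\mathbf{X}))$. A Bingham distribution with symmetric parameter matrix $\mathbf{A}$ on $\{\mathbf{U}\in\mathbb{R}^{N\times p}:\mathbf{U}^T\mathbf{U}=\mathbf{I}_p\}$ has density proportional to $\mathrm{etr}(\mathbf{U}^T\mathbf{A}\mathbf{U})$ with respect to the uniform (Haar) measure. *)

theory Defs
  imports "HOL-Analysis.Analysis" "HOL-Probability.Probability"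
begin

text \<open>Matrices are type-indexed: an N x p matrix is real^'p^'n (rows indexed by 'n,
  columns by 'p), with N = CARD('n), p = CARD('p), K = CARD('k).\<close>

definition etr :: "real^'n^'n \<Rightarrow> real" where
  "etr X = exp (trace X)"

definition stiefel :: "(real^'p^'n) set" where
  "stiefel = {U. transpose U ** U = mat 1}"

text \<open>Uniform (Haar) measure on the Stiefel manifold: the (unique) Borel probability
  measure concentrated on the Stiefel manifold and invariant under left multiplication
  by orthogonal N x N matrices.\<close>
definition stiefel_uniform :: "(real^'p^'n) measure \<Rightarrow> bool" where
  "stiefel_uniform \<mu> \<longleftrightarrow>
     prob_space \<mu> \<and> sets \<mu> = sets borel \<and> emeasure \<mu> stiefel = 1 \<and>
     (\<forall>Q::real^'n^'n. orthogonal_matrix Q \<longrightarrow> distr \<mu> borel (\<lambda>U. Q ** U) = \<mu>)"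

definition bingham_density :: "(real^'p^'n) measure \<Rightarrow> real^'n^'n \<Rightarrow> real^'p^'n \<Rightarrow> real" where
  "bingham_density \<mu> A U = etr (transpose U ** A ** U) / (\<integral>V. etr (transpose V ** A ** V) \<partial>\<mu>)"

text \<open>Likelihood p(Y | U, S) of the model Y = U S + N, the K columns of N i.i.d.
  Gaussian N(0, sigma^2 I_N). The Frobenius norm is the norm of real^'k^'n.\<close>
definition likelihood :: "real \<Rightarrow> real^'k^'n \<Rightarrow> real^'p^'n \<Rightarrow> real^'k^'p \<Rightarrow> real" where
  "likelihood \<sigma> Y U S =
     (2 * pi * \<sigma>\<^sup>2) powr (- real (CARD('n) * CARD('k)) / 2) *
     exp (- (norm (Y - U ** S))\<^sup>2 / (2 * \<sigma>\<^sup>2))"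

text \<open>Marginal likelihood p(Y | U) under the improper flat prior pi(S) = 1 (Lebesgue).\<close>
definition marginal_likelihood :: "real \<Rightarrow> real^'k^'n \<Rightarrow> real^'p^'n \<Rightarrow> real" where
  "marginal_likelihood \<sigma> Y U = (\<integral>S. likelihood \<sigma> Y U S \<partial>lborel)"

definition posterior_density ::
  "(real^'p^'n) measure \<Rightarrow> (real^'p^'n \<Rightarrow> real) \<Rightarrow> real \<Rightarrow> real^'k^'n \<Rightarrow> real^'p^'n \<Rightarrow> real" where
  "posterior_density \<mu> prior \<sigma> Y U =
     prior U * marginal_likelihood \<sigma> Y U /
     (\<integral>V. prior V * marginal_likelihood \<sigma> Y V \<partial>\<mu>)"

definition posterior_mean_proj ::
  "(real^'p^'n) measure \<Rightarrow> (real^'p^'n \<Rightarrow> real) \<Rightarrow> real \<Rightarrow> real^'k^'n \<Rightarrow> real^'n^'n" where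
  "posterior_mean_proj \<mu> prior \<sigma> Y =
     (\<integral>U. posterior_density \<mu> prior \<sigma> Y U *\<^sub>R (U ** transpose U) \<partial>\<mu>)"

definition top_eigvecs :: "real^'n^'n \<Rightarrow> real^'p^'n \<Rightarrow> bool" where
  "top_eigvecs M V \<longleftrightarrow>
     transpose V ** V = mat 1 \<and>
     (\<exists>lam::real^'p.
        (\<forall>i. M *v column i V = lam $ i *\<^sub>R column i V) \<and>
        (\<forall>x c. x \<noteq> 0 \<longrightarrow> M *v x = c *\<^sub>R x \<longrightarrow> transpose V *v x = 0 \<longrightarrow>
               (\<forall>i. c \<le> lam $ i)))"

end

theory Submission
  imports Defs
begin

text \<open>Completing the square in \<open>S\<close>, the likelihood is a Gaussian in \<open>S - U\<^sup>T Y\<close> times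
  \<open>etr (U\<^sup>T Y Y\<^sup>T U / (2 \<sigma>\<^sup>2))\<close>, so integrating out \<open>S\<close> turns the Bingham prior into
  the Bingham posterior with parameter \<open>A\<close>.

  For the estimator let \<open>E = \<integral> U U\<^sup>T p(U | Y) dU\<close>. By invariance of the uniform measure,
  \<open>E = Q E Q\<^sup>T\<close> for every orthogonal \<open>Q\<close> with \<open>Q\<^sup>T A Q = A\<close>; taking for \<open>Q\<close> the reflection
  in an eigenvector of \<open>A\<close> shows that it is an eigenvector of \<open>E\<close>. For orthonormal eigenvectors
  \<open>q, q'\<close> of \<open>A\<close> with eigenvalues \<open>l \<ge> l'\<close>, the reflection swapping them negates
  \<open>\<delta> = q\<^sup>T U U\<^sup>T q - q'\<^sup>T U U\<^sup>T q'\<close> and multiplies the density by \<open>exp (- (l - l') \<delta>)\<close>, whence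
  \<open>2 (q\<^sup>T E q - q'\<^sup>T E q') = \<integral> (1 - exp (- (l - l') \<delta>)) \<delta> p(U | Y) dU \<ge> 0\<close>. The inequality
  is strict for \<open>l > l'\<close>: if \<open>\<delta>\<close> vanished almost surely, then by invariance \<open>U U\<^sup>T\<close> would
  almost surely be a multiple of the identity, impossible for a rank-\<open>p\<close> projection when
  \<open>p < N\<close>. So in an orthonormal eigenbasis of \<open>A\<close> the matrix \<open>E\<close> is diagonal with eigenvalues
  in the same order, and both have the same top-\<open>p\<close> eigenvectors.\<close>

section \<open>Matrix algebra\<close>

lemma inner_matrix_mult_transpose:
  fixes X :: "real^'k^'n" and U :: "real^'p^'n" and Z :: "real^'k^'p"
  shows "inner X (U ** Z) = inner (transpose U ** X) Z"
proof -
  have "inner X (U ** Z) = (\<Sum>i\<in>UNIV. \<Sum>j\<in>UNIV. \<Sum>l\<in>UNIV. X$i$j * (U$i$l * Z$l$j))"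
    by (simp add: inner_vec_def matrix_matrix_mult_def sum_distrib_left)
  also have "\<dots> = (\<Sum>i\<in>UNIV. \<Sum>l\<in>UNIV. \<Sum>j\<in>UNIV. X$i$j * (U$i$l * Z$l$j))"
    by (rule sum.cong[OF refl], rule sum.swap)
  also have "\<dots> = (\<Sum>l\<in>UNIV. \<Sum>i\<in>UNIV. \<Sum>j\<in>UNIV. X$i$j * (U$i$l * Z$l$j))"
    by (rule sum.swap)
  also have "\<dots> = (\<Sum>l\<in>UNIV. \<Sum>j\<in>UNIV. \<Sum>i\<in>UNIV. X$i$j * (U$i$l * Z$l$j))"
    by (rule sum.cong[OF refl], rule sum.swap)
  also have "\<dots> = (\<Sum>l\<in>UNIV. \<Sum>j\<in>UNIV. (\<Sum>i\<in>UNIV. U$i$l * X$i$j) * Z$l$j)"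
    by (intro sum.cong refl) (simp add: sum_distrib_left sum_distrib_right mult_ac)
  also have "\<dots> = inner (transpose U ** X) Z"
    by (simp add: inner_vec_def matrix_matrix_mult_def transpose_def)
  finally show ?thesis .
qed

lemma norm_power2_eq_trace:
  fixes W :: "real^'k^'p"
  shows "(norm W)\<^sup>2 = trace (W ** transpose W)"
  by (simp add: power2_norm_eq_inner inner_vec_def trace_def matrix_matrix_mult_def transpose_def)

lemma matrix_add_rdistrib: "((A::real^'m^'n) + B) ** C = A ** C + B ** C"
  by (simp add: matrix_matrix_mult_def vec_eq_iff sum.distrib ring_distribs)

lemma matrix_diff_ldistrib: "(A::real^'m^'n) ** (B - C) = A ** B - A ** C"
  by (simp add: matrix_matrix_mult_def vec_eq_iff sum_subtractf ring_distribs)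

lemma matrix_diff_rdistrib: "((A::real^'m^'n) - B) ** C = A ** C - B ** C"
  by (simp add: matrix_matrix_mult_def vec_eq_iff sum_subtractf ring_distribs)

lemma matrix_mult_scaleR_left: "(k *\<^sub>R (A::real^'m^'n)) ** B = k *\<^sub>R (A ** B)"
  by (simp add: matrix_matrix_mult_def vec_eq_iff sum_distrib_left mult_ac)

lemma matrix_mult_scaleR_right: "(A::real^'m^'n) ** (k *\<^sub>R B) = k *\<^sub>R (A ** B)"
  by (simp add: matrix_matrix_mult_def vec_eq_iff sum_distrib_left mult_ac)

lemma trace_scaleR: "trace (k *\<^sub>R (A::real^'n^'n)) = k * trace A"
  by (simp add: trace_def sum_distrib_left)

lemma transpose_add: "transpose ((X::real^'n^'m) + Y) = transpose X + transpose Y"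
  by (simp add: transpose_def vec_eq_iff)

lemma matrix_vector_mult_neg: "(M::real^'n^'m) *v (- v) = - (M *v v)"
  by (simp add: matrix_vector_mult_def vec_eq_iff sum_negf)

lemma matrix_vector_mult_sum: "finite S \<Longrightarrow> (M::real^'n^'m) *v sum f S = (\<Sum>x\<in>S. M *v f x)"
  by (induction rule: finite_induct) (simp_all add: matrix_vector_right_distrib)

lemma inner_matrix_vector_symmetric:
  fixes A :: "real^'n^'n"
  assumes "transpose A = A"
  shows "inner (A *v x) y = inner x (A *v y)"
  using dot_lmul_matrix[of x A y] assms by (metis transpose_matrix_vector)

lemma inner_orthogonal_matrix:
  assumes "orthogonal_matrix Q"
  shows "inner (Q *v x) (Q *v y) = inner x (y :: real^'n)"
proof -
  have "inner (Q *v x) (Q *v y) = inner (transpose Q *v (Q *v x)) y"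
    by (metis dot_lmul_matrix transpose_matrix_vector transpose_transpose)
  also have "\<dots> = inner x y"
    using assms by (simp add: orthogonal_matrix_def matrix_vector_mul_assoc)
  finally show ?thesis .
qed

lemma norm_power2_stiefel_mult:
  fixes U :: "real^'p^'n" and Z :: "real^'k^'p"
  assumes "transpose U ** U = mat 1"
  shows "(norm (U ** Z))\<^sup>2 = (norm Z)\<^sup>2"
proof -
  have "inner (U ** Z) (U ** Z) = inner (transpose U ** (U ** Z)) Z"
    by (rule inner_matrix_mult_transpose)
  also have "\<dots> = inner Z Z"
    by (simp add: matrix_mul_assoc assms)
  finally show ?thesis by (simp add: power2_norm_eq_inner)
qed

text \<open>Pythagoras for the orthogonal projection \<open>U U\<^sup>T\<close>: completing the square in \<open>S\<close>.\<close>

lemma norm_power2_residual_split: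
  fixes U :: "real^'p^'n" and Y :: "real^'k^'n" and S :: "real^'k^'p"
  assumes U: "transpose U ** U = mat 1"
  shows "(norm (Y - U ** S))\<^sup>2 =
    (norm Y)\<^sup>2 - (norm (transpose U ** Y))\<^sup>2 + (norm (S - transpose U ** Y))\<^sup>2"
proof -
  define W where "W = transpose U ** Y"
  have split: "Y - U ** S = (Y - U ** W) + U ** (W - S)"
    by (simp add: matrix_diff_ldistrib)
  have orth: "inner (Y - U ** W) (U ** (W - S)) = 0"
  proof -
    have "transpose U ** (Y - U ** W) = 0"
      by (simp add: matrix_diff_ldistrib matrix_mul_assoc U W_def)
    then show ?thesis
      by (simp add: inner_matrix_mult_transpose)
  qed
  have proj: "(norm (Y - U ** W))\<^sup>2 = (norm Y)\<^sup>2 - (norm W)\<^sup>2"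
  proof -
    have "inner Y (U ** W) = inner W W"
      by (simp add: inner_matrix_mult_transpose W_def)
    moreover have "inner (U ** W) (U ** W) = inner W W"
      using norm_power2_stiefel_mult[OF U, of W] by (simp add: power2_norm_eq_inner)
    ultimately show ?thesis
      by (simp add: power2_norm_eq_inner inner_diff_left inner_diff_right inner_commute)
  qed
  have "(norm (Y - U ** S))\<^sup>2 =
      (norm (Y - U ** W))\<^sup>2 + 2 * inner (Y - U ** W) (U ** (W - S)) + (norm (U ** (W - S)))\<^sup>2"
    unfolding split
    by (simp add: power2_norm_eq_inner inner_add_left inner_add_right inner_commute)
  also have "\<dots> = (norm Y)\<^sup>2 - (norm W)\<^sup>2 + (norm (S - W))\<^sup>2"
    using orth proj norm_power2_stiefel_mult[OF U, of "W - S"] by (simp add: norm_minus_commute)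
  finally show ?thesis by (simp add: W_def)
qed

lemma trace_congruence_outer_gram:
  fixes U :: "real^'p^'n" and Y :: "real^'k^'n"
  shows "trace (transpose U ** (Y ** transpose Y) ** U) = (norm (transpose U ** Y))\<^sup>2"
  by (simp add: norm_power2_eq_trace matrix_transpose_mul matrix_mul_assoc)

lemma continuous_on_matrix_mult[continuous_intros]:
  fixes f :: "'a::topological_space \<Rightarrow> real^'m^'n" and g :: "'a \<Rightarrow> real^'k^'m"
  assumes "continuous_on S f" "continuous_on S g"
  shows "continuous_on S (\<lambda>x. f x ** g x)"
  unfolding matrix_matrix_mult_def by (intro continuous_intros assms)

lemma continuous_on_transpose[continuous_intros]:
  fixes f :: "'a::topological_space \<Rightarrow> real^'m^'n"
  assumes "continuous_on S f"
  shows "continuous_on S (\<lambda>x. transpose (f x))"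
  unfolding transpose_def by (intro continuous_intros assms)

lemma continuous_on_matrix_vector_mult[continuous_intros]:
  fixes f :: "'a::topological_space \<Rightarrow> real^'m^'n"
  assumes "continuous_on S f"
  shows "continuous_on S (\<lambda>x. f x *v v)"
  unfolding matrix_vector_mult_def by (intro continuous_intros assms)

lemma continuous_on_etr[continuous_intros]:
  fixes f :: "'a::topological_space \<Rightarrow> real^'n^'n"
  assumes "continuous_on S f"
  shows "continuous_on S (\<lambda>x. etr (f x))"
  unfolding etr_def trace_def by (intro continuous_intros assms)

lemma etr_pos: "etr X > 0"
  by (simp add: etr_def)

lemma etr_congruence_add_gram:
  fixes U :: "real^'p^'n" and M :: "real^'n^'n" and Y :: "real^'k^'n"
  shows "etr (transpose U ** (M + c *\<^sub>R (Y ** transpose Y)) ** U) =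
         etr (transpose U ** M ** U) * exp (c * (norm (transpose U ** Y))\<^sup>2)"
proof -
  have "transpose U ** (M + c *\<^sub>R (Y ** transpose Y)) ** U =
        transpose U ** M ** U + c *\<^sub>R (transpose U ** (Y ** transpose Y) ** U)"
    by (simp add: matrix_add_ldistrib matrix_add_rdistrib matrix_mult_scaleR_left
        matrix_mult_scaleR_right)
  then show ?thesis
    by (simp add: etr_def trace_add trace_scaleR trace_congruence_outer_gram exp_add)
qed


section \<open>Gaussian integrals and the marginal likelihood\<close>

lemma integrable_exp_neg_power2:
  fixes c :: real
  assumes c: "c > 0"
  shows "integrable lborel (\<lambda>t::real. exp (- t\<^sup>2 / c))"
proof -
  define s where "s = sqrt (c / 2)"
  have s: "s > 0" "2 * s\<^sup>2 = c"
    using c by (simp_all add: s_def)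
  have "integrable lborel (\<lambda>t. sqrt (2 * pi * s\<^sup>2) * normal_density 0 s t)"
    using s by (intro integrable_mult_right) simp
  moreover have "(\<lambda>t. sqrt (2 * pi * s\<^sup>2) * normal_density 0 s t) = (\<lambda>t. exp (- t\<^sup>2 / c))"
    using s by (auto simp: normal_density_def fun_eq_iff)
  ultimately show ?thesis by simp
qed

text \<open>The Gaussian kernel factors over the coordinates, reducing to the one-dimensional case.\<close>

lemma integrable_exp_neg_norm_power2:
  fixes c :: real
  assumes c: "c > 0"
  shows "integrable lborel (\<lambda>x::'a::euclidean_space. exp (- (norm x)\<^sup>2 / c))"
proof (subst integrable_iff_bounded, intro conjI)
  show "(\<lambda>x::'a. exp (- (norm x)\<^sup>2 / c)) \<in> borel_measurable lborel"
    by measurable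
  have factor: "exp (- (norm x)\<^sup>2 / c) = (\<Prod>b\<in>Basis. exp (- (x \<bullet> b)\<^sup>2 / c))" for x :: 'a
  proof -
    have "(norm x)\<^sup>2 = (\<Sum>b\<in>Basis. (x \<bullet> b)\<^sup>2)"
      unfolding power2_norm_eq_inner euclidean_inner[of x x] by (simp add: power2_eq_square)
    then have "- (norm x)\<^sup>2 / c = (\<Sum>b\<in>Basis. - (x \<bullet> b)\<^sup>2 / c)"
      by (simp add: sum_divide_distrib sum_negf)
    then show ?thesis by (simp add: exp_sum)
  qed
  have "(\<integral>\<^sup>+ x. ennreal (norm (exp (- (norm x)\<^sup>2 / c))) \<partial>(lborel::'a measure))
      = (\<integral>\<^sup>+ x. (\<Prod>b\<in>(Basis::'a set). ennreal (exp (- (x \<bullet> b)\<^sup>2 / c))) \<partial>lborel)"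
    by (intro nn_integral_cong) (subst factor, subst prod_ennreal, auto simp: prod_nonneg)
  also have "\<dots> = (\<Prod>b\<in>(Basis::'a set). (\<integral>\<^sup>+ t. ennreal (exp (- t\<^sup>2 / c)) \<partial>lborel))"
    by (rule nn_integral_lborel_prod) auto
  also have "\<dots> < \<infinity>"
  proof -
    have "(\<integral>\<^sup>+ t. ennreal (exp (- t\<^sup>2 / c)) \<partial>lborel) < \<infinity>"
      using integrable_exp_neg_power2[OF c] unfolding integrable_iff_bounded by simp
    then show ?thesis
      by (simp add: less_top[symmetric] ennreal_prod_eq_top power_eq_top_ennreal)
  qed
  finally show "(\<integral>\<^sup>+ x. ennreal (norm (exp (- (norm x)\<^sup>2 / c))) \<partial>(lborel::'a measure)) < \<infinity>" .
qed

lemma integral_exp_neg_norm_power2_pos: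
  fixes c :: real
  assumes c: "c > 0"
  shows "(\<integral>x. exp (- (norm x)\<^sup>2 / c) \<partial>(lborel::'a::euclidean_space measure)) > 0"
proof -
  have "(\<integral>x. exp (- (norm x)\<^sup>2 / c) \<partial>(lborel::'a measure)) \<noteq> 0"
  proof
    assume "(\<integral>x. exp (- (norm x)\<^sup>2 / c) \<partial>(lborel::'a measure)) = 0"
    then have "AE x in (lborel::'a measure). False"
      using integral_nonneg_eq_0_iff_AE[OF integrable_exp_neg_norm_power2[OF c]] by auto
    then show False
      by (simp add: trivial_limit_def[symmetric] ae_filter_eq_bot_iff)
  qed
  then show ?thesis
    by (simp add: order_less_le)
qed

lemma lborel_integral_translate:
  fixes W :: "'a::euclidean_space" and f :: "'a \<Rightarrow> real"
  assumes "f \<in> borel_measurable borel"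
  shows "(\<integral>x. f (x - W) \<partial>lborel) = (\<integral>x. f x \<partial>lborel)"
proof -
  have "(\<integral>x. f x \<partial>lborel) = (\<integral>x. f x \<partial>(distr lborel borel ((+) (- W))))"
    by (simp add: lborel_distr_plus)
  also have "\<dots> = (\<integral>x. f (- W + x) \<partial>lborel)"
    using assms by (intro integral_distr) auto
  finally show ?thesis by simp
qed

lemma likelihood_factor:
  fixes U :: "real^'p^'n" and Y :: "real^'k^'n" and S :: "real^'k^'p"
  assumes U: "transpose U ** U = mat 1"
  shows "likelihood \<sigma> Y U S =
     ((2 * pi * \<sigma>\<^sup>2) powr (- real (CARD('n) * CARD('k)) / 2) *
      exp (- ((norm Y)\<^sup>2 - (norm (transpose U ** Y))\<^sup>2) / (2 * \<sigma>\<^sup>2))) *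
      exp (- (norm (S - transpose U ** Y))\<^sup>2 / (2 * \<sigma>\<^sup>2))"
proof -
  have "- (norm (Y - U ** S))\<^sup>2 / (2 * \<sigma>\<^sup>2) =
        - ((norm Y)\<^sup>2 - (norm (transpose U ** Y))\<^sup>2) / (2 * \<sigma>\<^sup>2)
        + - (norm (S - transpose U ** Y))\<^sup>2 / (2 * \<sigma>\<^sup>2)"
    unfolding norm_power2_residual_split[OF U] by (simp add: add_divide_distrib diff_divide_distrib)
  then show ?thesis
    unfolding likelihood_def by (simp only: exp_add mult.assoc)
qed

lemma marginal_likelihood_eq:
  fixes U :: "real^'p^'n" and Y :: "real^'k^'n"
  assumes U: "transpose U ** U = mat 1"
  shows "marginal_likelihood \<sigma> Y U =
     ((2 * pi * \<sigma>\<^sup>2) powr (- real (CARD('n) * CARD('k)) / 2) *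
      exp (- ((norm Y)\<^sup>2 - (norm (transpose U ** Y))\<^sup>2) / (2 * \<sigma>\<^sup>2))) *
     (\<integral>S. exp (- (norm S)\<^sup>2 / (2 * \<sigma>\<^sup>2)) \<partial>(lborel :: (real^'k^'p) measure))"
proof -
  have "marginal_likelihood \<sigma> Y U =
     ((2 * pi * \<sigma>\<^sup>2) powr (- real (CARD('n) * CARD('k)) / 2) *
      exp (- ((norm Y)\<^sup>2 - (norm (transpose U ** Y))\<^sup>2) / (2 * \<sigma>\<^sup>2))) *
     (\<integral>S. exp (- (norm (S - transpose U ** Y))\<^sup>2 / (2 * \<sigma>\<^sup>2)) \<partial>(lborel :: (real^'k^'p) measure))"
    unfolding marginal_likelihood_def likelihood_factor[OF U] by (rule integral_mult_right_zero)
  also have "(\<integral>S. exp (- (norm (S - transpose U ** Y))\<^sup>2 / (2 * \<sigma>\<^sup>2)) \<partial>(lborel :: (real^'k^'p) measure))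
      = (\<integral>S. exp (- (norm S)\<^sup>2 / (2 * \<sigma>\<^sup>2)) \<partial>(lborel :: (real^'k^'p) measure))"
    by (rule lborel_integral_translate) measurable
  finally show ?thesis .
qed

lemma borel_measurable_marginal_likelihood:
  assumes "\<sigma> \<noteq> 0"
  shows "(marginal_likelihood \<sigma> (Y::real^'k^'n) :: real^'p^'n \<Rightarrow> real) \<in> borel_measurable borel"
proof -
  have "continuous_on UNIV (case_prod (likelihood \<sigma> Y) :: (real^'p^'n) \<times> (real^'k^'p) \<Rightarrow> real)"
    unfolding case_prod_beta' likelihood_def using assms by (intro continuous_intros) auto
  then have "(case_prod (likelihood \<sigma> Y) :: (real^'p^'n) \<times> (real^'k^'p) \<Rightarrow> real) \<in> borel_measurable borel"
    by (rule borel_measurable_continuous_onI)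
  then have "(case_prod (likelihood \<sigma> Y) :: (real^'p^'n) \<times> (real^'k^'p) \<Rightarrow> real)
      \<in> borel_measurable (borel \<Otimes>\<^sub>M lborel)"
    by (simp add: borel_prod measurable_cong_sets[OF sets_pair_measure_cong[OF refl sets_lborel] refl])
  then show ?thesis
    unfolding marginal_likelihood_def by (rule lborel.borel_measurable_lebesgue_integral)
qed

section \<open>The Stiefel manifold and its uniform measure\<close>

lemma closed_stiefel: "closed (stiefel :: (real^'p^'n) set)"
  unfolding stiefel_def by (intro closed_Collect_eq continuous_intros)

lemma norm_power2_stiefel:
  assumes "U \<in> stiefel"
  shows "(norm (U::real^'p^'n))\<^sup>2 = real CARD('p)"
proof -
  have "(norm U)\<^sup>2 = trace (transpose U ** U)"
    unfolding norm_power2_eq_trace by (rule trace_mul_sym)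
  then show ?thesis
    using assms by (simp add: stiefel_def trace_I)
qed

lemma compact_stiefel: "compact (stiefel :: (real^'p^'n) set)"
proof -
  have "norm U \<le> sqrt (real CARD('p))" if "U \<in> stiefel" for U :: "real^'p^'n"
    using norm_power2_stiefel[OF that] by (metis norm_ge_zero real_sqrt_abs real_sqrt_le_iff abs_of_nonneg order_refl)
  then have "bounded (stiefel :: (real^'p^'n) set)"
    unfolding bounded_iff by blast
  then show ?thesis
    using closed_stiefel by (simp add: compact_eq_bounded_closed)
qed

locale stiefel_haar =
  fixes \<mu> :: "(real^'p^'n) measure"
  assumes stiefel_uniform: "stiefel_uniform \<mu>"
begin

sublocale prob_space \<mu>
  using stiefel_uniform by (simp add: stiefel_uniform_def)

lemma sets_eq_borel: "sets \<mu> = sets borel"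
  using stiefel_uniform by (simp add: stiefel_uniform_def)

lemma AE_stiefel: "AE U in \<mu>. U \<in> stiefel"
  using stiefel_uniform by (intro AE_prob_1) (simp add: stiefel_uniform_def measure_def)

lemma AE_imp_ex: "(AE U in \<mu>. P U) \<Longrightarrow> \<exists>U. P U"
  using AE_False by (metis (mono_tags, lifting) eventually_mono)

lemma measurable_borel_iff: "f \<in> borel_measurable \<mu> \<longleftrightarrow> f \<in> borel_measurable borel"
  by (simp only: measurable_cong_sets[OF sets_eq_borel refl])

lemma borel_measurable_continuous:
  fixes f :: "real^'p^'n \<Rightarrow> 'b::{second_countable_topology, real_normed_vector}"
  assumes "continuous_on UNIV f"
  shows "f \<in> borel_measurable \<mu>"
  using borel_measurable_continuous_onI[OF assms] by (simp add: measurable_borel_iff)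

text \<open>Continuous functions are bounded on the compact Stiefel manifold, which carries \<open>\<mu>\<close>.\<close>

lemma integrable_continuous:
  fixes f :: "real^'p^'n \<Rightarrow> 'b::{banach, second_countable_topology}"
  assumes "continuous_on UNIV f"
  shows "integrable \<mu> f"
proof -
  have "compact (f ` stiefel)"
    by (rule compact_continuous_image[OF continuous_on_subset[OF assms] compact_stiefel]) simp
  then have "bounded (f ` stiefel)"
    by (rule compact_imp_bounded)
  then obtain B where B: "\<forall>U\<in>stiefel. norm (f U) \<le> B"
    unfolding bounded_iff by auto
  have "AE U in \<mu>. norm (f U) \<le> B"
    using AE_stiefel by eventually_elim (use B in auto)
  then show ?thesis
    by (rule integrable_const_bound) (rule borel_measurable_continuous[OF assms])
qed

lemma integral_continuous_pos:
  assumes c: "continuous_on UNIV f" and pos: "\<And>x. f x > (0::real)"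
  shows "(\<integral>x. f x \<partial>\<mu>) > 0"
proof -
  have "(\<integral>x. f x \<partial>\<mu>) \<noteq> 0"
  proof
    assume "(\<integral>x. f x \<partial>\<mu>) = 0"
    then have "AE x in \<mu>. f x = 0"
      using integral_nonneg_eq_0_iff_AE[OF integrable_continuous[OF c]] pos by (simp add: less_imp_le)
    then obtain x where "f x = 0"
      using AE_imp_ex by blast
    then show False
      using pos[of x] by simp
  qed
  moreover have "(\<integral>x. f x \<partial>\<mu>) \<ge> 0"
    using pos by (simp add: less_imp_le)
  ultimately show ?thesis
    by simp
qed

lemma integral_orthogonal_invariant:
  fixes h :: "real^'p^'n \<Rightarrow> 'b::{banach, second_countable_topology}"
  assumes Q: "orthogonal_matrix Q" and h: "continuous_on UNIV h"
  shows "(\<integral>U. h (Q ** U) \<partial>\<mu>) = (\<integral>U. h U \<partial>\<mu>)"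
proof -
  have "(\<integral>U. h U \<partial>\<mu>) = (\<integral>U. h U \<partial>(distr \<mu> borel (\<lambda>U. Q ** U)))"
    using stiefel_uniform Q by (simp add: stiefel_uniform_def)
  also have "\<dots> = (\<integral>U. h (Q ** U) \<partial>\<mu>)"
    by (intro integral_distr borel_measurable_continuous_onI[OF h] borel_measurable_continuous)
      (intro continuous_intros)
  finally show ?thesis by simp
qed

lemma bingham_normaliser_pos: "(\<integral>V. etr (transpose V ** A ** V) \<partial>\<mu>) > 0"
  by (intro integral_continuous_pos continuous_intros etr_pos)

lemma continuous_on_bingham_density: "continuous_on UNIV (bingham_density \<mu> A)"
  unfolding bingham_density_def using bingham_normaliser_pos[of A]
  by (intro continuous_intros) auto

lemma bingham_density_pos: "bingham_density \<mu> A U > 0"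
  unfolding bingham_density_def by (intro divide_pos_pos etr_pos bingham_normaliser_pos)

lemma bingham_density_congruence:
  assumes "transpose Q ** A ** Q = A"
  shows "bingham_density \<mu> A (Q ** U) = bingham_density \<mu> A U"
proof -
  have "transpose (Q ** U) ** A ** (Q ** U) = transpose U ** (transpose Q ** A ** Q) ** U"
    by (simp add: matrix_transpose_mul matrix_mul_assoc)
  then show ?thesis
    unfolding bingham_density_def using assms by simp
qed

section \<open>The posterior is a Bingham distribution\<close>

text \<open>Only \<open>etr (U\<^sup>T Y Y\<^sup>T U / (2 \<sigma>\<^sup>2))\<close> in the marginal likelihood depends on \<open>U\<close>; the
  rest is a Gaussian integral over \<open>S\<close>.\<close>

lemma prior_mult_marginal_likelihood_proportional:
  fixes M :: "real^'n^'n" and Y :: "real^'k^'n" and \<sigma> :: real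
  assumes \<sigma>: "\<sigma> > 0"
  obtains D where "D > 0" and "\<And>V. V \<in> stiefel \<Longrightarrow>
    bingham_density \<mu> M V * marginal_likelihood \<sigma> Y V =
    D * etr (transpose V ** (M + (1 / (2 * \<sigma>\<^sup>2)) *\<^sub>R (Y ** transpose Y)) ** V)"
proof
  define Z where "Z = (\<integral>V. etr (transpose V ** M ** V) \<partial>\<mu>)"
  define C where "C = (2 * pi * \<sigma>\<^sup>2) powr (- real (CARD('n) * CARD('k)) / 2)"
  define G where "G = (\<integral>S. exp (- (norm S)\<^sup>2 / (2 * \<sigma>\<^sup>2)) \<partial>(lborel :: (real^'k^'p) measure))"
  have "Z > 0"
    unfolding Z_def by (rule bingham_normaliser_pos)
  moreover have "G > 0"
    unfolding G_def using \<sigma> by (intro integral_exp_neg_norm_power2_pos) simp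
  moreover have "C > 0"
    unfolding C_def using \<sigma> by simp
  ultimately show "C * exp (- (norm Y)\<^sup>2 / (2 * \<sigma>\<^sup>2)) * G / Z > 0"
    by simp
  fix V :: "real^'p^'n"
  assume "V \<in> stiefel"
  then have V: "transpose V ** V = mat 1"
    by (simp add: stiefel_def)
  have "bingham_density \<mu> M V * marginal_likelihood \<sigma> Y V =
    etr (transpose V ** M ** V) / Z *
    (C * exp (- ((norm Y)\<^sup>2 - (norm (transpose V ** Y))\<^sup>2) / (2 * \<sigma>\<^sup>2)) * G)"
    unfolding bingham_density_def marginal_likelihood_eq[OF V] Z_def C_def G_def ..
  moreover have "exp (- ((norm Y)\<^sup>2 - (norm (transpose V ** Y))\<^sup>2) / (2 * \<sigma>\<^sup>2)) =
      exp (- (norm Y)\<^sup>2 / (2 * \<sigma>\<^sup>2)) * exp ((1 / (2 * \<sigma>\<^sup>2)) * (norm (transpose V ** Y))\<^sup>2)"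
    by (simp add: exp_add[symmetric] diff_divide_distrib)
  moreover have "etr (transpose V ** (M + (1 / (2 * \<sigma>\<^sup>2)) *\<^sub>R (Y ** transpose Y)) ** V) =
      etr (transpose V ** M ** V) * exp ((1 / (2 * \<sigma>\<^sup>2)) * (norm (transpose V ** Y))\<^sup>2)"
    by (rule etr_congruence_add_gram)
  ultimately show "bingham_density \<mu> M V * marginal_likelihood \<sigma> Y V =
    C * exp (- (norm Y)\<^sup>2 / (2 * \<sigma>\<^sup>2)) * G / Z *
    etr (transpose V ** (M + (1 / (2 * \<sigma>\<^sup>2)) *\<^sub>R (Y ** transpose Y)) ** V)"
    by simp
qed

lemma posterior_density_bingham:
  fixes M :: "real^'n^'n" and Y :: "real^'k^'n" and \<sigma> :: real
  assumes \<sigma>: "\<sigma> > 0" and U: "U \<in> stiefel"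
  shows "posterior_density \<mu> (bingham_density \<mu> M) \<sigma> Y U =
    bingham_density \<mu> (M + (1 / (2 * \<sigma>\<^sup>2)) *\<^sub>R (Y ** transpose Y)) U"
proof -
  define A where "A = M + (1 / (2 * \<sigma>\<^sup>2)) *\<^sub>R (Y ** transpose Y)"
  define ZA where "ZA = (\<integral>V. etr (transpose V ** A ** V) \<partial>\<mu>)"
  obtain D where "D > 0" and joint: "\<And>V. V \<in> stiefel \<Longrightarrow>
      bingham_density \<mu> M V * marginal_likelihood \<sigma> Y V = D * etr (transpose V ** A ** V)"
    by (rule prior_mult_marginal_likelihood_proportional[OF \<sigma>, where M=M and Y=Y, folded A_def], rule that)
  have "(\<integral>V. bingham_density \<mu> M V * marginal_likelihood \<sigma> Y V \<partial>\<mu>) =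
      (\<integral>V. D * etr (transpose V ** A ** V) \<partial>\<mu>)"
  proof (rule integral_cong_AE)
    have "bingham_density \<mu> M \<in> borel_measurable \<mu>"
      by (rule borel_measurable_continuous[OF continuous_on_bingham_density])
    moreover have "marginal_likelihood \<sigma> Y \<in> borel_measurable \<mu>"
      using borel_measurable_marginal_likelihood[of \<sigma> Y] \<sigma> by (simp add: measurable_borel_iff)
    ultimately show "(\<lambda>V. bingham_density \<mu> M V * marginal_likelihood \<sigma> Y V) \<in> borel_measurable \<mu>"
      by measurable
    show "(\<lambda>V. D * etr (transpose V ** A ** V)) \<in> borel_measurable \<mu>"
      by (intro borel_measurable_continuous continuous_intros)
    show "AE V in \<mu>. bingham_density \<mu> M V * marginal_likelihood \<sigma> Y V = D * etr (transpose V ** A ** V)"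
      using AE_stiefel by eventually_elim (rule joint)
  qed
  also have "\<dots> = D * ZA"
    unfolding ZA_def by simp
  finally have normaliser: "(\<integral>V. bingham_density \<mu> M V * marginal_likelihood \<sigma> Y V \<partial>\<mu>) = D * ZA" .
  have "posterior_density \<mu> (bingham_density \<mu> M) \<sigma> Y U = D * etr (transpose U ** A ** U) / (D * ZA)"
    unfolding posterior_density_def normaliser joint[OF U] ..
  also have "\<dots> = etr (transpose U ** A ** U) / ZA"
    using \<open>D > 0\<close> by (intro mult_divide_mult_cancel_left) simp
  also have "\<dots> = bingham_density \<mu> A U"
    unfolding bingham_density_def ZA_def ..
  finally show ?thesis
    unfolding A_def .
qed

end

section \<open>Householder reflections\<close>

definition outer :: "real^'n \<Rightarrow> real^'n \<Rightarrow> real^'n^'n" where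
  "outer x y = (\<chi> i j. x $ i * y $ j)"

definition householder :: "real^'n \<Rightarrow> real^'n^'n" where
  "householder v = mat 1 - (2 / inner v v) *\<^sub>R outer v v"

lemma outer_mult_vec: "outer x y *v z = inner y z *\<^sub>R x"
  by (simp add: outer_def matrix_vector_mult_def inner_vec_def vec_eq_iff sum_distrib_left mult_ac)

lemma householder_mult_vec: "householder v *v z = z - (2 * inner v z / inner v v) *\<^sub>R v"
  by (simp add: householder_def matrix_vector_mult_diff_rdistrib outer_mult_vec
      scaleR_matrix_vector_assoc[symmetric])

lemma householder_orthogonal_fix: "inner v z = 0 \<Longrightarrow> householder v *v z = z"
  by (simp add: householder_mult_vec)

lemma householder_self: "v \<noteq> 0 \<Longrightarrow> householder v *v v = - v"
  by (simp add: householder_mult_vec scaleR_2[symmetric] algebra_simps)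

lemma householder_neg: "householder (- v) = householder (v::real^'n)"
  by (simp add: householder_def outer_def)

lemma transpose_householder: "transpose (householder v) = householder v"
  by (simp add: householder_def outer_def transpose_def vec_eq_iff mat_def mult.commute)

lemma householder_householder:
  fixes v :: "real^'n"
  assumes "v \<noteq> 0"
  shows "householder v ** householder v = mat 1"
proof (rule matrix_eq[THEN iffD2], intro allI)
  fix z :: "real^'n"
  define c where "c = 2 * inner v z / inner v v"
  have "inner v (householder v *v z) = - inner v z"
    using assms by (simp add: householder_mult_vec c_def inner_diff_right)
  then have "householder v *v (householder v *v z) = (z - c *\<^sub>R v) + c *\<^sub>R v"
    by (simp add: householder_mult_vec c_def)
  then show "(householder v ** householder v) *v z = mat 1 *v z"
    by (simp add: matrix_vector_mul_assoc[symmetric])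
qed

lemma orthogonal_matrix_householder: "v \<noteq> 0 \<Longrightarrow> orthogonal_matrix (householder v)"
  by (simp add: orthogonal_matrix_def transpose_householder householder_householder)

lemma householder_swap:
  assumes "norm a = 1" "norm b = 1" "a \<noteq> b"
  shows "householder (a - b) *v a = b"
proof -
  have aa: "inner a a = 1" "inner b b = 1"
    using assms by (simp_all add: norm_eq_1)
  have "inner (a - b) a = 1 - inner a b"
    using aa by (simp add: inner_diff_left inner_commute[of b a])
  moreover have "inner (a - b) (a - b) = 2 - 2 * inner a b"
    using aa by (simp add: inner_diff_left inner_diff_right inner_commute)
  moreover have "inner a b \<noteq> 1"
  proof
    assume "inner a b = 1"
    then have "inner (a - b) (a - b) = 0"
      using aa by (simp add: inner_diff_left inner_diff_right inner_commute)
    then show False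
      using assms(3) by simp
  qed
  ultimately have ratio: "2 * inner (a - b) a / inner (a - b) (a - b) = 1"
    by (simp add: divide_eq_1_iff)
  show ?thesis
    unfolding householder_mult_vec ratio by simp
qed

text \<open>Two reflections suffice: one moves \<open>q\<close> to \<open>x\<close>, the next fixes \<open>x\<close> and moves the image of
  \<open>q'\<close> to \<open>y\<close>.\<close>

lemma orthogonal_matrix_map_orthonormal_pair:
  fixes q q' x y :: "real^'n"
  assumes q: "norm q = 1" "norm q' = 1" "inner q q' = 0"
    and xy: "norm x = 1" "norm y = 1" "inner x y = 0"
  obtains Q where "orthogonal_matrix Q" "Q *v q = x" "Q *v q' = y"
proof -
  obtain Q1 where Q1: "orthogonal_matrix Q1" "Q1 *v q = x"
  proof (cases "q = x")
    case True
    then show ?thesis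
      using that[of "mat 1"] by (simp add: orthogonal_matrix_id)
  next
    case False
    then have "q - x \<noteq> 0"
      by simp
    then show ?thesis
      using that[of "householder (q - x)"] orthogonal_matrix_householder
        householder_swap[OF q(1) xy(1) False] by blast
  qed
  define q2 where "q2 = Q1 *v q'"
  have q2: "norm q2 = 1" "inner x q2 = 0"
    using inner_orthogonal_matrix[OF Q1(1), of q' q'] inner_orthogonal_matrix[OF Q1(1), of q q'] q Q1(2)
    by (simp_all add: q2_def norm_eq_1)
  obtain Q2 where Q2: "orthogonal_matrix Q2" "Q2 *v q2 = y" "Q2 *v x = x"
  proof (cases "q2 = y")
    case True
    then show ?thesis
      using that[of "mat 1"] by (simp add: orthogonal_matrix_id)
  next
    case False
    have "q2 - y \<noteq> 0"
      using False by simp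
    moreover have "inner (q2 - y) x = 0"
      using q2 xy by (simp add: inner_diff_left inner_commute[of q2 x] inner_commute[of y x])
    ultimately show ?thesis
      using that[of "householder (q2 - y)"] orthogonal_matrix_householder
        householder_swap[OF q2(1) xy(2) False] householder_orthogonal_fix by blast
  qed
  show ?thesis
  proof
    show "orthogonal_matrix (Q2 ** Q1)"
      by (rule orthogonal_matrix_mul[OF Q2(1) Q1(1)])
    show "(Q2 ** Q1) *v q = x" "(Q2 ** Q1) *v q' = y"
      using Q1 Q2 by (simp_all add: matrix_vector_mul_assoc[symmetric] q2_def[symmetric])
  qed
qed

lemma householder_conj_eigvec:
  fixes A :: "real^'n^'n"
  assumes sym: "transpose A = A" and x: "x \<noteq> 0" "A *v x = l *\<^sub>R x"
  shows "householder x ** A ** householder x = A"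
proof (rule matrix_eq[THEN iffD2], intro allI)
  fix z
  define H where "H = householder x"
  define k where "k = 2 / inner x x"
  have Hv: "H *v y = y - (k * inner x y) *\<^sub>R x" for y
    by (simp add: H_def householder_mult_vec k_def)
  have AHz: "A *v (H *v z) = A *v z - (k * inner x z * l) *\<^sub>R x"
    by (simp add: Hv matrix_vector_mult_diff_distrib matrix_vector_mult_scaleR x(2))
  have xAz: "inner x (A *v z) = l * inner x z"
    using inner_matrix_vector_symmetric[OF sym, of x z] x(2) by simp
  have xx: "k * inner x x = 2"
    using x(1) by (simp add: k_def)
  have "inner x (A *v (H *v z)) = l * inner x z - k * inner x z * l * inner x x"
    unfolding AHz by (simp add: inner_diff_right xAz)
  also have "\<dots> = - l * inner x z"
    using xx by (simp add: algebra_simps)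
  finally have xAHz: "inner x (A *v (H *v z)) = - l * inner x z" .
  have "H *v (A *v (H *v z)) = A *v z"
    unfolding Hv[of "A *v (H *v z)"] xAHz unfolding AHz by (simp add: algebra_simps)
  then show "(householder x ** A ** householder x) *v z = A *v z"
    by (simp add: H_def matrix_vector_mul_assoc[symmetric])
qed

text \<open>The reflection negates \<open>x\<close> and fixes its orthogonal complement, so \<open>E x = - H (E x)\<close>
  lies on the line through \<open>x\<close>.\<close>

lemma eigvec_if_householder_invariant:
  fixes E :: "real^'n^'n"
  assumes x: "x \<noteq> 0" and E: "E = householder x ** E ** householder x"
  shows "\<exists>c. E *v x = c *\<^sub>R x"
proof -
  define k where "k = 2 / inner x x"
  define y where "y = E *v x"
  have "y = householder x *v (E *v (householder x *v x))"
    unfolding y_def by (subst E) (simp add: matrix_vector_mul_assoc[symmetric])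
  also have "\<dots> = - (householder x *v y)"
    by (simp add: householder_self[OF x] y_def matrix_vector_mult_neg)
  finally have "y = - (y - (k * inner x y) *\<^sub>R x)"
    by (simp add: householder_mult_vec k_def)
  then have twice: "2 *\<^sub>R y = (k * inner x y) *\<^sub>R x"
    by (simp add: algebra_simps scaleR_2[symmetric])
  have "y = (1 / 2) *\<^sub>R (2 *\<^sub>R y)"
    by simp
  also have "\<dots> = ((k * inner x y) / 2) *\<^sub>R x"
    by (simp add: twice)
  finally show ?thesis
    unfolding y_def by blast
qed

lemma householder_conj_swap_eigvecs:
  fixes A :: "real^'n^'n"
  assumes sym: "transpose A = A" and q: "norm q = 1" "norm q' = 1" "inner q q' = 0"
    and e: "A *v q = l *\<^sub>R q" "A *v q' = l' *\<^sub>R q'"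
  shows "householder (q - q') ** A ** householder (q - q') =
    A - (l - l') *\<^sub>R (outer q q - outer q' q')"
proof (rule matrix_eq[THEN iffD2], intro allI)
  fix z
  define w where "w = q - q'"
  define s where "s = inner q z"
  define t where "t = inner q' z"
  have qq: "inner q q = 1" "inner q' q' = 1"
    using q by (simp_all add: norm_eq_1)
  have "inner w w = 2"
    using qq q(3) by (simp add: w_def inner_diff_left inner_diff_right inner_commute[of q' q])
  then have Hv: "householder w *v y = y - inner w y *\<^sub>R w" for y
    by (simp add: householder_mult_vec)
  have wz: "inner w z = s - t"
    by (simp add: w_def s_def t_def inner_diff_left)
  have Aw: "A *v w = l *\<^sub>R q - l' *\<^sub>R q'"
    by (simp add: w_def matrix_vector_mult_diff_distrib e)
  have wAz: "inner w (A *v z) = l * s - l' * t"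
    using inner_matrix_vector_symmetric[OF sym, of w z] by (simp add: Aw inner_diff_left s_def t_def)
  have wAw: "inner w (A *v w) = l + l'"
    unfolding Aw using qq q(3) by (simp add: w_def inner_diff_left inner_diff_right inner_commute[of q' q])
  have AHz: "A *v (householder w *v z) = A *v z - (s - t) *\<^sub>R (l *\<^sub>R q - l' *\<^sub>R q')"
    by (simp add: Hv wz matrix_vector_mult_diff_distrib matrix_vector_mult_scaleR Aw)
  have "inner w (A *v (householder w *v z)) = inner w (A *v z) - (s - t) * inner w (A *v w)"
    unfolding AHz Aw[symmetric] by (simp add: inner_diff_right)
  also have "\<dots> = l * t - l' * s"
    by (simp add: wAz wAw algebra_simps)
  finally have wAHz: "inner w (A *v (householder w *v z)) = l * t - l' * s" .
  have "householder w *v (A *v (householder w *v z)) =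
      A *v z - (s - t) *\<^sub>R (l *\<^sub>R q - l' *\<^sub>R q') - (l * t - l' * s) *\<^sub>R w"
    using Hv[of "A *v (householder w *v z)"] unfolding wAHz unfolding AHz .
  also have "\<dots> = A *v z - ((l - l') * s) *\<^sub>R q + ((l - l') * t) *\<^sub>R q'"
    by (simp add: algebra_simps w_def)
  also have "\<dots> = (A - (l - l') *\<^sub>R (outer q q - outer q' q')) *v z"
    by (simp add: matrix_vector_mult_diff_rdistrib scaleR_matrix_vector_assoc[symmetric] outer_mult_vec
        s_def t_def algebra_simps)
  finally show "(householder (q - q') ** A ** householder (q - q')) *v z =
      (A - (l - l') *\<^sub>R (outer q q - outer q' q')) *v z"
    by (simp add: matrix_vector_mul_assoc[symmetric] w_def)
qed

section \<open>The spectral theorem for symmetric matrices\<close>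

lemma coeff_eq_0_if_quadratic_nonpos:
  fixes c d :: real
  assumes "\<And>t. 2 * t * c + t\<^sup>2 * d \<le> 0"
  shows "c = 0"
proof (rule ccontr)
  assume c: "c \<noteq> 0"
  define e where "e = \<bar>d\<bar> + 1"
  have e: "e > 0" "2 * e + d > 0"
    unfolding e_def by auto
  have "2 * (c / e) * c + (c / e)\<^sup>2 * d \<le> 0"
    by (rule assms)
  then have "c * c * (2 * e + d) \<le> 0"
    using e by (simp add: power2_eq_square field_simps)
  moreover have "c * c > 0"
    using c not_real_square_gt_zero by blast
  then have "c * c * (2 * e + d) > 0"
    using e(2) by (rule mult_pos_pos)
  ultimately show False
    by linarith
qed

lemma rayleigh_maximiser_orthogonal:
  fixes A :: "real^'n^'n"
  assumes sym: "transpose A = A" and S: "subspace S"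
    and v: "v \<in> S" "norm v = 1"
    and max: "\<And>y. y \<in> S \<Longrightarrow> norm y = 1 \<Longrightarrow> inner y (A *v y) \<le> inner v (A *v v)"
    and wS: "w \<in> S" and wv: "inner w v = 0"
  shows "inner w (A *v v) = 0"
proof -
  define l where "l = inner v (A *v v)"
  have vv: "inner v v = 1"
    using v(2) by (simp add: norm_eq_1)
  show ?thesis
  proof (rule coeff_eq_0_if_quadratic_nonpos)
    fix t
    define y where "y = v + t *\<^sub>R w"
    have yy: "inner y y = 1 + t\<^sup>2 * inner w w"
      unfolding y_def using vv wv
      by (simp add: inner_add_left inner_add_right inner_commute power2_eq_square)
    have yS: "y \<in> S"
      unfolding y_def using S v(1) wS by (simp add: subspace_add subspace_mul)
    have yn: "norm y > 0"
      using yy by (simp add: norm_eq_sqrt_inner add_pos_nonneg)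
    have "(1 / norm y) *\<^sub>R y \<in> S"
      using S yS by (rule subspace_mul)
    then have "inner ((1 / norm y) *\<^sub>R y) (A *v ((1 / norm y) *\<^sub>R y)) \<le> l"
      unfolding l_def using yn by (intro max) simp_all
    then have "inner y (A *v y) / (norm y)\<^sup>2 \<le> l"
      by (simp add: matrix_vector_mult_scaleR power2_eq_square)
    then have "inner y (A *v y) \<le> l * inner y y"
      using yn by (simp add: divide_le_eq power2_norm_eq_inner[symmetric] mult.commute)
    moreover have "inner y (A *v y) = l + 2 * t * inner w (A *v v) + t\<^sup>2 * inner w (A *v w)"
    proof -
      have "inner v (A *v w) = inner w (A *v v)"
        using inner_matrix_vector_symmetric[OF sym, of v w] by (simp add: inner_commute)
      moreover have "A *v y = A *v v + t *\<^sub>R (A *v w)"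
        unfolding y_def by (simp add: matrix_vector_right_distrib matrix_vector_mult_scaleR)
      ultimately show ?thesis
        unfolding l_def by (simp add: y_def inner_add_left inner_add_right power2_eq_square distrib_left)
    qed
    ultimately show "2 * t * inner w (A *v v) + t\<^sup>2 * (inner w (A *v w) - l * inner w w) \<le> 0"
      using yy by (simp add: algebra_simps)
  qed
qed

lemma rayleigh_maximiser_eigvec:
  fixes A :: "real^'n^'n"
  assumes sym: "transpose A = A" and S: "subspace S" and inv: "\<And>x. x \<in> S \<Longrightarrow> A *v x \<in> S"
    and v: "v \<in> S" "norm v = 1"
    and max: "\<And>y. y \<in> S \<Longrightarrow> norm y = 1 \<Longrightarrow> inner y (A *v y) \<le> inner v (A *v v)"
  shows "A *v v = inner v (A *v v) *\<^sub>R v"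
proof -
  define l where "l = inner v (A *v v)"
  define z where "z = A *v v - l *\<^sub>R v"
  have zS: "z \<in> S"
    unfolding z_def using S inv v(1) by (simp add: subspace_diff subspace_mul)
  have zv: "inner z v = 0"
    using v(2) by (simp add: z_def l_def inner_diff_left inner_commute[of "A *v v" v] norm_eq_1)
  have "inner z z = inner z (A *v v) - l * inner z v"
    unfolding z_def by (simp add: inner_diff_right)
  also have "\<dots> = 0"
    using rayleigh_maximiser_orthogonal[OF sym S v max zS zv] zv by simp
  finally show ?thesis
    by (simp add: z_def l_def)
qed

lemma invariant_subspace_has_eigvec:
  fixes A :: "real^'n^'n"
  assumes sym: "transpose A = A" and S: "subspace S" and inv: "\<And>x. x \<in> S \<Longrightarrow> A *v x \<in> S"
    and x0: "x0 \<in> S" "x0 \<noteq> 0"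
  obtains v l where "v \<in> S" "norm v = 1" "A *v v = l *\<^sub>R v"
proof -
  define K where "K = S \<inter> {x. norm x = 1}"
  have "closed K"
    unfolding K_def by (intro closed_Int closed_subspace[OF S] closed_Collect_eq continuous_intros)
  moreover have "bounded K"
    unfolding K_def bounded_iff by auto
  ultimately have "compact K"
    by (simp add: compact_eq_bounded_closed)
  moreover have "(1 / norm x0) *\<^sub>R x0 \<in> K"
    using x0 S by (simp add: K_def subspace_mul)
  then have "K \<noteq> {}"
    by auto
  moreover have "continuous_on K (\<lambda>x. inner x (A *v x))"
    by (intro continuous_intros)
  ultimately obtain v where v: "v \<in> K" and max: "\<And>y. y \<in> K \<Longrightarrow> inner y (A *v y) \<le> inner v (A *v v)"
    using continuous_attains_sup[of K "\<lambda>x. inner x (A *v x)"] by blast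
  have "v \<in> S" "norm v = 1"
    using v by (simp_all add: K_def)
  moreover have "A *v v = inner v (A *v v) *\<^sub>R v"
    by (intro rayleigh_maximiser_eigvec[OF sym S inv \<open>v \<in> S\<close> \<open>norm v = 1\<close>] max) (simp_all add: K_def)
  ultimately show ?thesis
    by (rule that)
qed

definition orthonormal_eigvecs :: "real^'n^'n \<Rightarrow> (real^'n) set \<Rightarrow> bool" where
  "orthonormal_eigvecs A B \<longleftrightarrow> finite B \<and> (\<forall>b\<in>B. norm b = 1 \<and> (\<exists>l. A *v b = l *\<^sub>R b)) \<and>
     (\<forall>b\<in>B. \<forall>b'\<in>B. b \<noteq> b' \<longrightarrow> inner b b' = 0)"

lemma orthonormal_eigvecs_card:
  assumes "orthonormal_eigvecs A (B :: (real^'n) set)"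
  shows "card B \<le> CARD('n)"
proof -
  have "pairwise orthogonal B" "0 \<notin> B"
    using assms by (auto simp: orthonormal_eigvecs_def pairwise_def orthogonal_def)
  then have "independent B"
    by (rule pairwise_orthogonal_independent)
  then have "card B \<le> DIM(real^'n)"
    using independent_bound by blast
  then show ?thesis
    by simp
qed

lemma inner_orthonormal_sum:
  assumes fin: "finite B" and norm: "\<forall>c\<in>B. norm c = 1"
    and orth: "\<forall>c\<in>B. \<forall>c'\<in>B. c \<noteq> c' \<longrightarrow> inner c c' = 0" and b: "b \<in> B"
  shows "inner b (\<Sum>c\<in>B. f c *\<^sub>R c) = f b"
proof -
  have "inner b (\<Sum>c\<in>B. f c *\<^sub>R c) = (\<Sum>c\<in>B. f c * inner b c)"
    by (simp add: inner_sum_right)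
  also have "\<dots> = f b * inner b b + (\<Sum>c\<in>B - {b}. f c * inner b c)"
    using fin b by (simp add: sum.remove)
  also have "(\<Sum>c\<in>B - {b}. f c * inner b c) = 0"
    using orth b by (intro sum.neutral) auto
  finally show ?thesis
    using norm b by (simp add: norm_eq_1)
qed

lemma orthogonal_eigvecs_invariant:
  fixes A :: "real^'n^'n"
  assumes sym: "transpose A = A" and B: "\<forall>b\<in>B. \<exists>l. A *v b = l *\<^sub>R b"
    and y: "\<forall>b\<in>B. orthogonal b y"
  shows "\<forall>b\<in>B. orthogonal b (A *v y)"
proof
  fix b
  assume "b \<in> B"
  then obtain l where "A *v b = l *\<^sub>R b"
    using B by blast
  then show "orthogonal b (A *v y)"
    using inner_matrix_vector_symmetric[OF sym, of b y] y \<open>b \<in> B\<close> by (simp add: orthogonal_def)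
qed

text \<open>A maximal orthonormal family of eigenvectors spans: otherwise its orthogonal
  complement, which is invariant, would contain a further eigenvector.\<close>

theorem spectral_theorem:
  fixes A :: "real^'n^'n"
  assumes sym: "transpose A = A"
  shows "\<exists>B. orthonormal_eigvecs A B \<and> (\<forall>x. x = (\<Sum>b\<in>B. inner b x *\<^sub>R b))"
proof -
  define P where "P k \<longleftrightarrow> (\<exists>B. orthonormal_eigvecs A B \<and> card B = k)" for k
  have "P 0"
    unfolding P_def by (rule exI[of _ "{}"]) (simp add: orthonormal_eigvecs_def)
  moreover have "\<forall>k. P k \<longrightarrow> k \<le> CARD('n)"
    unfolding P_def using orthonormal_eigvecs_card by blast
  ultimately obtain k where "P k" and kmax: "\<forall>k'. P k' \<longrightarrow> k' \<le> k"
    using Nat.ex_has_greatest_nat[of P 0 "CARD('n)"] by blast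
  then obtain B where B: "orthonormal_eigvecs A B" and cB: "card B = k"
    unfolding P_def by blast
  have fin: "finite B" and norm: "\<forall>b\<in>B. norm b = 1"
    and orth: "\<forall>b\<in>B. \<forall>b'\<in>B. b \<noteq> b' \<longrightarrow> inner b b' = 0"
    using B by (simp_all add: orthonormal_eigvecs_def)
  define S where "S = {y. \<forall>b\<in>B. orthogonal b y}"
  have "subspace S"
    unfolding S_def by (rule subspace_orthogonal_to_vectors)
  have invariant: "A *v y \<in> S" if "y \<in> S" for y
    using orthogonal_eigvecs_invariant[OF sym, of B y] B that
    unfolding S_def orthonormal_eigvecs_def by blast
  have "x = (\<Sum>b\<in>B. inner b x *\<^sub>R b)" for x
  proof (rule ccontr)
    define r where "r = x - (\<Sum>b\<in>B. inner b x *\<^sub>R b)"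
    assume "x \<noteq> (\<Sum>b\<in>B. inner b x *\<^sub>R b)"
    then have "r \<noteq> 0"
      by (simp add: r_def)
    moreover have "r \<in> S"
      using inner_orthonormal_sum[OF fin norm orth, of _ "\<lambda>b. inner b x"]
      by (simp add: S_def orthogonal_def r_def inner_diff_right)
    ultimately obtain v l where v: "v \<in> S" "norm v = 1" "A *v v = l *\<^sub>R v"
      using invariant_subspace_has_eigvec[OF sym \<open>subspace S\<close> invariant] by blast
    have "v \<notin> B"
    proof
      assume "v \<in> B"
      then have "inner v v = 0"
        using v(1) by (simp add: S_def orthogonal_def)
      then show False
        using v(2) by simp
    qed
    have "orthonormal_eigvecs A (insert v B)"
      using B v \<open>v \<notin> B\<close> by (auto simp: orthonormal_eigvecs_def S_def orthogonal_def inner_commute)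
    moreover have "card (insert v B) = k + 1"
      using fin \<open>v \<notin> B\<close> cB by simp
    ultimately have "P (k + 1)"
      unfolding P_def by blast
    then show False
      using kmax by fastforce
  qed
  then show ?thesis
    using B by blast
qed

lemma orthonormal_eigenbasis:
  fixes A :: "real^'n^'n"
  assumes sym: "transpose A = A"
  obtains B a where "finite B" "\<forall>b\<in>B. norm b = 1" "\<forall>b\<in>B. \<forall>b'\<in>B. b \<noteq> b' \<longrightarrow> inner b b' = 0"
    "\<And>x. x = (\<Sum>b\<in>B. inner b x *\<^sub>R b)" "\<And>b. b \<in> B \<Longrightarrow> A *v b = a b *\<^sub>R b"
proof -
  obtain B where B: "orthonormal_eigvecs A B" and expansion: "\<And>x. x = (\<Sum>b\<in>B. inner b x *\<^sub>R b)"
    using spectral_theorem[OF sym] by blast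
  define a where "a b = (SOME l. A *v b = l *\<^sub>R b)" for b
  have a: "A *v b = a b *\<^sub>R b" if "b \<in> B" for b
  proof -
    have "\<exists>l. A *v b = l *\<^sub>R b"
      using B that unfolding orthonormal_eigvecs_def by blast
    then show ?thesis
      unfolding a_def by (rule someI_ex)
  qed
  show ?thesis
  proof (rule that)
    show "finite B" "\<forall>b\<in>B. norm b = 1" "\<forall>b\<in>B. \<forall>b'\<in>B. b \<noteq> b' \<longrightarrow> inner b b' = 0"
      using B unfolding orthonormal_eigvecs_def by blast+
    show "x = (\<Sum>b\<in>B. inner b x *\<^sub>R b)" for x
      by (rule expansion)
    show "A *v b = a b *\<^sub>R b" if "b \<in> B" for b
      using that by (rule a)
  qed
qed

section \<open>Matrices sharing an eigenbasis with the same ordering of eigenvalues\<close>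

lemma column_ne_zero_stiefel:
  fixes V :: "real^'p^'n"
  assumes "transpose V ** V = mat 1"
  shows "column i V \<noteq> 0"
proof -
  have "inner (column i V) (column i V) = (transpose V ** V) $ i $ i"
    by (simp add: matrix_mult_transpose_dot_column)
  then show ?thesis
    using assms by (auto simp: mat_def)
qed

locale ordered_common_eigenbasis =
  fixes A E :: "real^'n^'n" and B :: "(real^'n) set" and a e :: "real^'n \<Rightarrow> real"
  assumes finite_basis: "finite B"
    and norm_basis: "\<forall>b\<in>B. norm b = 1"
    and orthogonal_basis: "\<forall>b\<in>B. \<forall>b'\<in>B. b \<noteq> b' \<longrightarrow> inner b b' = 0"
    and expansion: "\<And>x. x = (\<Sum>b\<in>B. inner b x *\<^sub>R b)"
    and eigvec_A: "\<And>b. b \<in> B \<Longrightarrow> A *v b = a b *\<^sub>R b"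
    and eigvec_E: "\<And>b. b \<in> B \<Longrightarrow> E *v b = e b *\<^sub>R b"
    and same_order: "\<And>b b'. b \<in> B \<Longrightarrow> b' \<in> B \<Longrightarrow> a b \<le> a b' \<longleftrightarrow> e b \<le> e b'"
begin

lemma swap: "ordered_common_eigenbasis E A B e a"
proof
  show "x = (\<Sum>b\<in>B. inner b x *\<^sub>R b)" for x
    by (rule expansion)
qed (simp_all add: finite_basis norm_basis orthogonal_basis eigvec_A eigvec_E same_order)

lemma inner_basis_sum: "b \<in> B \<Longrightarrow> inner b (\<Sum>c\<in>B. f c *\<^sub>R c) = f b"
  by (rule inner_orthonormal_sum[OF finite_basis norm_basis orthogonal_basis])

lemma matrix_vector_mult_A: "A *v x = (\<Sum>b\<in>B. (inner b x * a b) *\<^sub>R b)"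
proof -
  have "A *v x = A *v (\<Sum>b\<in>B. inner b x *\<^sub>R b)"
    by (rule arg_cong[OF expansion])
  then show ?thesis
    by (simp add: matrix_vector_mult_sum[OF finite_basis] matrix_vector_mult_scaleR eigvec_A
        cong: sum.cong)
qed

lemma matrix_vector_mult_E: "E *v x = (\<Sum>b\<in>B. (inner b x * e b) *\<^sub>R b)"
proof -
  have "E *v x = E *v (\<Sum>b\<in>B. inner b x *\<^sub>R b)"
    by (rule arg_cong[OF expansion])
  then show ?thesis
    by (simp add: matrix_vector_mult_sum[OF finite_basis] matrix_vector_mult_scaleR eigvec_E
        cong: sum.cong)
qed

text \<open>An eigenvector of \<open>A\<close> only has components along basis vectors of its eigenvalue,
  on which \<open>E\<close> acts by one common scalar.\<close>

lemma eigvec_transfer: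
  assumes x: "x \<noteq> 0" "A *v x = l *\<^sub>R x"
  obtains b where "b \<in> B" "a b = l" "E *v x = e b *\<^sub>R x"
proof -
  have component: "a b = l" if "b \<in> B" "inner b x \<noteq> 0" for b
  proof -
    have "inner b x * a b = inner b (A *v x)"
      using inner_basis_sum[OF that(1), of "\<lambda>b. inner b x * a b"] by (simp add: matrix_vector_mult_A)
    also have "\<dots> = l * inner b x"
      using x(2) by simp
    finally show ?thesis
      using that(2) by simp
  qed
  obtain b0 where b0: "b0 \<in> B" "inner b0 x \<noteq> 0"
  proof (rule ccontr)
    assume "\<not> thesis"
    with that have "(\<Sum>b\<in>B. inner b x *\<^sub>R b) = 0"
      by (intro sum.neutral) auto
    then have "x = 0"
      by (rule trans[OF expansion])
    then show False
      using x(1) by simp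
  qed
  have "E *v x = (\<Sum>b\<in>B. (inner b x * e b0) *\<^sub>R b)"
    unfolding matrix_vector_mult_E
  proof (rule sum.cong[OF refl])
    fix b assume b: "b \<in> B"
    show "(inner b x * e b) *\<^sub>R b = (inner b x * e b0) *\<^sub>R b"
    proof (cases "inner b x = 0")
      case False
      then have "e b = e b0"
        using component[OF b False] component[OF b0] same_order[OF b b0(1)] same_order[OF b0(1) b]
        by simp
      then show ?thesis
        by simp
    qed simp
  qed
  also have "\<dots> = e b0 *\<^sub>R x"
    by (subst (2) expansion[of x]) (simp add: scaleR_sum_right mult.commute)
  finally show ?thesis
    using that b0 component[OF b0] by blast
qed

lemma top_eigvecs_transfer:
  assumes "top_eigvecs A V"
  shows "top_eigvecs E V"
proof -
  obtain lam where VV: "transpose V ** V = mat 1"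
    and ev: "\<And>i. A *v column i V = lam $ i *\<^sub>R column i V"
    and top: "\<And>x c i. x \<noteq> 0 \<Longrightarrow> A *v x = c *\<^sub>R x \<Longrightarrow> transpose V *v x = 0 \<Longrightarrow> c \<le> lam $ i"
    using assms unfolding top_eigvecs_def by blast
  have "\<exists>b. b \<in> B \<and> a b = lam $ i \<and> E *v column i V = e b *\<^sub>R column i V" for i
    by (rule eigvec_transfer[OF column_ne_zero_stiefel[OF VV] ev]) blast
  then obtain bs where bs: "\<And>i. bs i \<in> B" "\<And>i. a (bs i) = lam $ i"
    "\<And>i. E *v column i V = e (bs i) *\<^sub>R column i V"
    by metis
  show ?thesis
    unfolding top_eigvecs_def
  proof (intro conjI exI[of _ "\<chi> i. e (bs i)"] allI impI)
    show "transpose V ** V = mat 1"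
      by (rule VV)
    show "E *v column i V = (\<chi> i. e (bs i)) $ i *\<^sub>R column i V" for i
      using bs by simp
  next
    fix x c i
    assume x: "x \<noteq> 0" "E *v x = c *\<^sub>R x" "transpose V *v x = 0"
    obtain b where b: "b \<in> B" "e b = c" "A *v x = a b *\<^sub>R x"
      using ordered_common_eigenbasis.eigvec_transfer[OF swap x(1,2)] by blast
    have "a b \<le> a (bs i)"
      using top[OF x(1) b(3) x(3)] bs by simp
    then show "c \<le> (\<chi> i. e (bs i)) $ i"
      using same_order[OF b(1) bs(1)] b by simp
  qed
qed

lemma top_eigvecs_iff: "top_eigvecs E V \<longleftrightarrow> top_eigvecs A V"
  using top_eigvecs_transfer ordered_common_eigenbasis.top_eigvecs_transfer[OF swap] by blast

end

lemma top_eigvecs_iff_if_same_order: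
  fixes A E :: "real^'n^'n"
  assumes sym: "transpose A = A"
    and eigvec: "\<And>x l. x \<noteq> 0 \<Longrightarrow> A *v x = l *\<^sub>R x \<Longrightarrow> \<exists>c. E *v x = c *\<^sub>R x"
    and order: "\<And>q q' l l'. norm q = 1 \<Longrightarrow> norm q' = 1 \<Longrightarrow> inner q q' = 0 \<Longrightarrow>
        A *v q = l *\<^sub>R q \<Longrightarrow> A *v q' = l' *\<^sub>R q' \<Longrightarrow> l \<le> l' \<longleftrightarrow> inner q (E *v q) \<le> inner q' (E *v q')"
  shows "top_eigvecs E V \<longleftrightarrow> top_eigvecs A V"
proof -
  obtain B a where fin: "finite B" and norms: "\<forall>b\<in>B. norm b = 1"
    and orths: "\<forall>b\<in>B. \<forall>b'\<in>B. b \<noteq> b' \<longrightarrow> inner b b' = 0"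
    and expansion: "\<And>x. x = (\<Sum>b\<in>B. inner b x *\<^sub>R b)" and a: "\<And>b. b \<in> B \<Longrightarrow> A *v b = a b *\<^sub>R b"
    by (rule orthonormal_eigenbasis[OF sym], rule that)
  have norm: "norm b = 1" if "b \<in> B" for b
    using norms that by blast
  have orth: "inner b b' = 0" if "b \<in> B" "b' \<in> B" "b \<noteq> b'" for b b'
    using orths that by blast
  define e where "e b = (SOME c. E *v b = c *\<^sub>R b)" for b
  have e: "E *v b = e b *\<^sub>R b" if "b \<in> B" for b
  proof -
    have "b \<noteq> 0"
      using norm[OF that] by auto
    then have "\<exists>c. E *v b = c *\<^sub>R b"
      using eigvec a[OF that] by blast
    then show ?thesis
      unfolding e_def by (rule someI_ex)
  qed
  have quadform: "inner b (E *v b) = e b" if "b \<in> B" for b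
    using e[OF that] norm[OF that] by (simp add: norm_eq_1)
  have "ordered_common_eigenbasis A E B a e"
  proof
    show "finite B"
      by (rule fin)
    show "\<forall>b\<in>B. norm b = 1" "\<forall>b\<in>B. \<forall>b'\<in>B. b \<noteq> b' \<longrightarrow> inner b b' = 0"
      by (rule norms, rule orths)
    show "x = (\<Sum>b\<in>B. inner b x *\<^sub>R b)" for x
      by (rule expansion)
    show "A *v b = a b *\<^sub>R b" "E *v b = e b *\<^sub>R b" if "b \<in> B" for b
      using that by (rule a, rule e)
    show "a b \<le> a b' \<longleftrightarrow> e b \<le> e b'" if "b \<in> B" "b' \<in> B" for b b'
    proof (cases "b = b'")
      case False
      then show ?thesis
        using order[OF norm[OF that(1)] norm[OF that(2)] orth[OF that False] a[OF that(1)] a[OF that(2)]]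
        by (simp add: quadform that)
    qed simp
  qed
  then show ?thesis
    by (rule ordered_common_eigenbasis.top_eigvecs_iff)
qed

section \<open>Quadratic forms of projections\<close>

definition proj_quadform :: "real^'n \<Rightarrow> real^'p^'n \<Rightarrow> real" where
  "proj_quadform x U = inner x ((U ** transpose U) *v x)"

lemma continuous_on_proj_quadform: "continuous_on S (proj_quadform x)"
  unfolding proj_quadform_def by (intro continuous_intros)

lemma proj_quadform_scaleR: "proj_quadform (s *\<^sub>R x) U = s\<^sup>2 * proj_quadform x U"
  by (simp add: proj_quadform_def matrix_vector_mult_scaleR power2_eq_square)

lemma proj_quadform_matrix_mult: "proj_quadform x ((Q::real^'n^'n) ** U) = proj_quadform (transpose Q *v x) U"
proof -
  have "(Q ** U) ** transpose (Q ** U) = Q ** (U ** transpose U) ** transpose Q"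
    by (simp add: matrix_transpose_mul matrix_mul_assoc)
  then have "proj_quadform x (Q ** U) = inner x (Q *v ((U ** transpose U) *v (transpose Q *v x)))"
    by (simp only: proj_quadform_def matrix_vector_mul_assoc matrix_mul_assoc)
  also have "\<dots> = proj_quadform (transpose Q *v x) U"
    unfolding proj_quadform_def by (metis dot_lmul_matrix transpose_matrix_vector transpose_transpose)
  finally show ?thesis .
qed

lemma trace_congruence_outer: "trace (transpose U ** outer x x ** U) = proj_quadform x U"
proof -
  have "trace (transpose U ** outer x x ** U) = trace (U ** (transpose U ** outer x x))"
    by (rule trace_mul_sym)
  also have "\<dots> = trace ((U ** transpose U) ** outer x x)"
    by (simp add: matrix_mul_assoc)
  also have "\<dots> = proj_quadform x U"
    by (simp add: trace_def matrix_matrix_mult_def outer_def inner_vec_def matrix_vector_mult_def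
        proj_quadform_def sum_distrib_left mult_ac)
  finally show ?thesis .
qed

lemma inner_axis_matrix_axis: "inner (axis k 1) ((M::real^'n^'n) *v axis l 1) = M $ k $ l"
  by (simp add: matrix_vector_mult_basis inner_axis' column_def)

lemma scalar_matrix_if_axis_quadforms:
  fixes M :: "real^'n^'n"
  assumes sym: "transpose M = M"
    and diag: "\<And>k l. inner (axis k 1) (M *v axis k 1) = inner (axis l 1) (M *v axis l 1)"
    and offdiag: "\<And>k l. k \<noteq> l \<Longrightarrow>
      inner (axis k 1 + axis l 1) (M *v (axis k 1 + axis l 1)) =
      inner (axis k 1 - axis l 1) (M *v (axis k 1 - axis l 1))"
  shows "M = M $ k0 $ k0 *\<^sub>R mat 1"
proof -
  define c where "c = M $ k0 $ k0"
  have "M $ k $ l = (c *\<^sub>R mat 1 :: real^'n^'n) $ k $ l" for k l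
  proof (cases "k = l")
    case True
    then show ?thesis
      using diag[of k k0] by (simp add: inner_axis_matrix_axis mat_def c_def)
  next
    case False
    have "M $ l $ k = transpose M $ k $ l"
      by (simp add: transpose_def)
    then have symmetric: "M $ l $ k = M $ k $ l"
      by (simp only: sym)
    have "inner (axis k 1 + axis l 1) (M *v (axis k 1 + axis l 1)) -
        inner (axis k 1 - axis l 1) (M *v (axis k 1 - axis l 1)) =
        2 * inner (axis k 1) (M *v axis l 1) + 2 * inner (axis l 1) (M *v axis k 1)"
      by (simp add: matrix_vector_right_distrib matrix_vector_mult_diff_distrib inner_add_left
          inner_add_right inner_diff_left inner_diff_right)
    also have "\<dots> = 4 * M $ k $ l"
      by (simp add: inner_axis_matrix_axis symmetric)
    finally have "inner (axis k 1 + axis l 1) (M *v (axis k 1 + axis l 1)) -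
        inner (axis k 1 - axis l 1) (M *v (axis k 1 - axis l 1)) = 4 * M $ k $ l" .
    then show ?thesis
      using offdiag[OF False] False by (simp add: mat_def)
  qed
  then show ?thesis
    unfolding c_def[symmetric] by (simp add: vec_eq_iff)
qed

text \<open>Idempotence forces the multiple to be \<open>0\<close> or \<open>1\<close>, the trace forces it to be \<open>p / N\<close>.\<close>

lemma stiefel_projection_not_scalar:
  fixes U :: "real^'p^'n"
  assumes U: "transpose U ** U = mat 1" and pn: "CARD('p) < CARD('n)"
  shows "U ** transpose U \<noteq> t *\<^sub>R mat 1"
proof
  define P where "P = U ** transpose U"
  assume "U ** transpose U = t *\<^sub>R mat 1"
  then have Pt: "P = t *\<^sub>R mat 1"
    by (simp add: P_def)
  have "trace P = trace (transpose U ** U)"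
    unfolding P_def by (rule trace_mul_sym)
  then have trace: "t * real CARD('n) = real CARD('p)"
    using U by (simp add: Pt trace_I trace_scaleR)
  have "P ** P = U ** (transpose U ** U) ** transpose U"
    by (simp add: P_def matrix_mul_assoc)
  then have "P ** P = P"
    using U by (simp add: P_def)
  then have "(t * t) *\<^sub>R (mat 1 :: real^'n^'n) = t *\<^sub>R mat 1"
    by (simp add: Pt matrix_mult_scaleR_left matrix_mult_scaleR_right)
  then have "((t * t) *\<^sub>R (mat 1 :: real^'n^'n)) $ k $ k = (t *\<^sub>R (mat 1 :: real^'n^'n)) $ k $ k" for k
    by (rule arg_cong)
  then have "t * t = t"
    by (simp add: mat_def)
  then have "t = 0 \<or> t = 1"
    by (metis mult_cancel_left2 mult_eq_0_iff)
  then show False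
    using trace pn by auto
qed

lemma axis_sum_diff_orthogonal:
  assumes "k \<noteq> l"
  shows "axis k 1 + axis l 1 \<noteq> (0 :: real^'n)"
    and "norm (axis k 1 + axis l 1 :: real^'n) = norm (axis k 1 - axis l 1 :: real^'n)"
    and "inner (axis k 1 + axis l 1) (axis k 1 - axis l 1 :: real^'n) = 0"
proof -
  have "inner (axis k 1 + axis l 1) (axis k 1 + axis l 1 :: real^'n) = 2"
    "inner (axis k 1 - axis l 1) (axis k 1 - axis l 1 :: real^'n) = 2"
    using assms by (simp_all add: inner_add_left inner_add_right inner_diff_left inner_diff_right
        inner_axis_axis)
  then show "axis k 1 + axis l 1 \<noteq> (0 :: real^'n)"
    "norm (axis k 1 + axis l 1 :: real^'n) = norm (axis k 1 - axis l 1 :: real^'n)"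
    by (auto simp: norm_eq_sqrt_inner)
  show "inner (axis k 1 + axis l 1) (axis k 1 - axis l 1 :: real^'n) = 0"
    using assms by (simp add: inner_add_left inner_diff_right inner_axis_axis)
qed

lemma stiefel_axis_proj_quadforms_not_all_eq:
  fixes U :: "real^'p^'n"
  assumes "U \<in> stiefel" and pn: "CARD('p) < CARD('n)"
  shows "\<not> ((\<forall>k l. proj_quadform (axis k 1) U = proj_quadform (axis l 1) U) \<and>
    (\<forall>k l. k \<noteq> l \<longrightarrow> proj_quadform (axis k 1 + axis l 1) U = proj_quadform (axis k 1 - axis l 1) U))"
proof
  assume "(\<forall>k l. proj_quadform (axis k 1) U = proj_quadform (axis l 1) U) \<and>
    (\<forall>k l. k \<noteq> l \<longrightarrow> proj_quadform (axis k 1 + axis l 1) U = proj_quadform (axis k 1 - axis l 1) U)"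
  then have diag: "\<forall>k l. proj_quadform (axis k 1) U = proj_quadform (axis l 1) U"
    and offdiag: "\<forall>k l. k \<noteq> l \<longrightarrow>
      proj_quadform (axis k 1 + axis l 1) U = proj_quadform (axis k 1 - axis l 1) U"
    by blast+
  have U: "transpose U ** U = mat 1"
    using \<open>U \<in> stiefel\<close> by (simp add: stiefel_def)
  have "U ** transpose U = (U ** transpose U) $ k0 $ k0 *\<^sub>R mat 1" for k0
  proof (rule scalar_matrix_if_axis_quadforms)
    show "transpose (U ** transpose U) = U ** transpose U"
      by (simp add: matrix_transpose_mul)
    show "inner (axis k 1) ((U ** transpose U) *v axis k 1) = inner (axis l 1) ((U ** transpose U) *v axis l 1)"
      for k l
      using diag unfolding proj_quadform_def by blast
    show "inner (axis k 1 + axis l 1) ((U ** transpose U) *v (axis k 1 + axis l 1)) =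
        inner (axis k 1 - axis l 1) ((U ** transpose U) *v (axis k 1 - axis l 1))" if "k \<noteq> l" for k l
      using offdiag that unfolding proj_quadform_def by blast
  qed
  then show False
    using stiefel_projection_not_scalar[OF U pn] by blast
qed

section \<open>The mean projection of a Bingham distribution\<close>

lemma bounded_linear_matrix_congruence: "bounded_linear (\<lambda>X::real^'n^'m. P ** X ** (R::real^'k^'n))"
  unfolding linear_conv_bounded_linear[symmetric]
  by (rule linearI) (simp_all add: matrix_add_ldistrib matrix_add_rdistrib matrix_mult_scaleR_left
      matrix_mult_scaleR_right)

lemma bounded_linear_quadform: "bounded_linear (\<lambda>X::real^'n^'n. inner q (X *v q))"
  unfolding linear_conv_bounded_linear[symmetric]
  by (rule linearI) (simp_all add: matrix_vector_mult_add_rdistrib inner_add_right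
      scaleR_matrix_vector_assoc[symmetric])

lemma one_minus_exp_mult_nonneg:
  fixes c d :: real
  assumes "c \<ge> 0"
  shows "(1 - exp (- c * d)) * d \<ge> 0"
proof (cases "d \<ge> 0")
  case True
  then have "exp (- c * d) \<le> 1"
    using assms by (simp add: mult_nonneg_nonneg)
  then show ?thesis
    using True by simp
next
  case False
  then have "exp (- c * d) \<ge> 1"
    using assms by (simp add: mult_nonneg_nonpos)
  then show ?thesis
    using False by (simp add: mult_nonpos_nonpos)
qed

lemma one_minus_exp_mult_pos:
  fixes c d :: real
  assumes "c > 0" "d \<noteq> 0"
  shows "(1 - exp (- c * d)) * d > 0"
proof (cases "d > 0")
  case True
  then have "exp (- c * d) < 1"
    using assms by simp
  then show ?thesis
    using True by simp
next
  case False
  then have "d < 0"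
    using assms by simp
  then have "exp (- c * d) > 1"
    using assms by (simp add: mult_pos_neg)
  then show ?thesis
    using \<open>d < 0\<close> by (simp add: mult_neg_neg)
qed

definition bingham_proj_mean :: "(real^'p^'n) measure \<Rightarrow> real^'n^'n \<Rightarrow> real^'n^'n" where
  "bingham_proj_mean \<mu> A = (\<integral>U. bingham_density \<mu> A U *\<^sub>R (U ** transpose U) \<partial>\<mu>)"

context stiefel_haar
begin

lemma posterior_mean_proj_bingham:
  assumes \<sigma>: "\<sigma> > 0"
  shows "posterior_mean_proj \<mu> (bingham_density \<mu> M) \<sigma> Y =
    bingham_proj_mean \<mu> (M + (1 / (2 * \<sigma>\<^sup>2)) *\<^sub>R (Y ** transpose Y))"
  unfolding posterior_mean_proj_def bingham_proj_mean_def
proof (rule integral_cong_AE)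
  have "bingham_density \<mu> M \<in> borel_measurable \<mu>"
    by (rule borel_measurable_continuous[OF continuous_on_bingham_density])
  moreover have "marginal_likelihood \<sigma> Y \<in> borel_measurable \<mu>"
    using borel_measurable_marginal_likelihood[of \<sigma> Y] \<sigma> by (simp add: measurable_borel_iff)
  moreover have "(\<lambda>U. U ** transpose U) \<in> borel_measurable \<mu>"
    by (intro borel_measurable_continuous continuous_intros)
  ultimately show "(\<lambda>U. posterior_density \<mu> (bingham_density \<mu> M) \<sigma> Y U *\<^sub>R (U ** transpose U))
      \<in> borel_measurable \<mu>"
    unfolding posterior_density_def by measurable
  show "(\<lambda>U. bingham_density \<mu> (M + (1 / (2 * \<sigma>\<^sup>2)) *\<^sub>R (Y ** transpose Y)) U *\<^sub>R (U ** transpose U))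
      \<in> borel_measurable \<mu>"
    by (intro borel_measurable_continuous continuous_intros continuous_on_bingham_density)
  show "AE U in \<mu>. posterior_density \<mu> (bingham_density \<mu> M) \<sigma> Y U *\<^sub>R (U ** transpose U) =
      bingham_density \<mu> (M + (1 / (2 * \<sigma>\<^sup>2)) *\<^sub>R (Y ** transpose Y)) U *\<^sub>R (U ** transpose U)"
    using AE_stiefel by eventually_elim (simp add: posterior_density_bingham[OF \<sigma>])
qed

lemma continuous_on_bingham_proj_integrand:
  "continuous_on UNIV (\<lambda>U. bingham_density \<mu> A U *\<^sub>R (U ** transpose U))"
  by (intro continuous_intros continuous_on_bingham_density)

lemma bingham_proj_mean_congruence:
  assumes Q: "orthogonal_matrix Q" and QA: "transpose Q ** A ** Q = A"
  shows "bingham_proj_mean \<mu> A = Q ** bingham_proj_mean \<mu> A ** transpose Q"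
proof -
  have "bingham_proj_mean \<mu> A =
      (\<integral>U. bingham_density \<mu> A (Q ** U) *\<^sub>R ((Q ** U) ** transpose (Q ** U)) \<partial>\<mu>)"
    unfolding bingham_proj_mean_def
    by (rule integral_orthogonal_invariant[OF Q continuous_on_bingham_proj_integrand, symmetric])
  also have "\<dots> = (\<integral>U. Q ** (bingham_density \<mu> A U *\<^sub>R (U ** transpose U)) ** transpose Q \<partial>\<mu>)"
    by (simp add: bingham_density_congruence[OF QA] matrix_transpose_mul matrix_mul_assoc
        matrix_mult_scaleR_left matrix_mult_scaleR_right)
  also have "\<dots> = Q ** bingham_proj_mean \<mu> A ** transpose Q"
    unfolding bingham_proj_mean_def
    by (rule integral_bounded_linear[OF bounded_linear_matrix_congruence
          integrable_continuous[OF continuous_on_bingham_proj_integrand]])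
  finally show ?thesis .
qed

text \<open>The reflection in an eigenvector of \<open>A\<close> preserves \<open>A\<close>, hence commutes with the mean
  projection.\<close>

lemma bingham_proj_mean_eigvec:
  fixes A :: "real^'n^'n"
  assumes sym: "transpose A = A" and x: "x \<noteq> 0" "A *v x = l *\<^sub>R x"
  shows "\<exists>c. bingham_proj_mean \<mu> A *v x = c *\<^sub>R x"
proof (rule eigvec_if_householder_invariant[OF x(1)])
  show "bingham_proj_mean \<mu> A = householder x ** bingham_proj_mean \<mu> A ** householder x"
    using bingham_proj_mean_congruence[OF orthogonal_matrix_householder[OF x(1)]]
      householder_conj_eigvec[OF sym x] by (simp add: transpose_householder)
qed

lemma quadform_bingham_proj_mean:
  "inner x (bingham_proj_mean \<mu> A *v x) = (\<integral>U. bingham_density \<mu> A U * proj_quadform x U \<partial>\<mu>)"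
proof -
  have "inner x (bingham_proj_mean \<mu> A *v x) =
      (\<integral>U. inner x ((bingham_density \<mu> A U *\<^sub>R (U ** transpose U)) *v x) \<partial>\<mu>)"
    unfolding bingham_proj_mean_def
    by (rule integral_bounded_linear[OF bounded_linear_quadform
          integrable_continuous[OF continuous_on_bingham_proj_integrand], symmetric])
  then show ?thesis
    by (simp add: proj_quadform_def scaleR_matrix_vector_assoc[symmetric])
qed

lemma bingham_density_householder_swap:
  fixes A :: "real^'n^'n"
  assumes sym: "transpose A = A" and q: "norm q = 1" "norm q' = 1" "inner q q' = 0"
    and e: "A *v q = l *\<^sub>R q" "A *v q' = l' *\<^sub>R q'"
  shows "bingham_density \<mu> A (householder (q - q') ** U) =
    bingham_density \<mu> A U * exp (- (l - l') * (proj_quadform q U - proj_quadform q' U))"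
proof -
  define R where "R = householder (q - q')"
  define c where "c = l - l'"
  define \<delta> where "\<delta> = proj_quadform q U - proj_quadform q' U"
  have "transpose (R ** U) ** A ** (R ** U) = transpose U ** (R ** A ** R) ** U"
    by (simp add: R_def transpose_householder matrix_transpose_mul matrix_mul_assoc)
  also have "R ** A ** R = A - c *\<^sub>R (outer q q - outer q' q')"
    unfolding R_def c_def by (rule householder_conj_swap_eigvecs[OF sym q e])
  finally have "transpose (R ** U) ** A ** (R ** U) = transpose U ** A ** U -
      c *\<^sub>R (transpose U ** outer q q ** U - transpose U ** outer q' q' ** U)"
    by (simp add: matrix_diff_ldistrib matrix_diff_rdistrib matrix_mult_scaleR_left
        matrix_mult_scaleR_right)
  then have "trace (transpose (R ** U) ** A ** (R ** U)) = trace (transpose U ** A ** U) + - c * \<delta>"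
    by (simp add: trace_sub trace_scaleR trace_congruence_outer \<delta>_def)
  then show ?thesis
    unfolding R_def[symmetric] bingham_density_def etr_def by (simp add: c_def \<delta>_def exp_add)
qed

text \<open>Symmetrising the integral over the reflection \<open>R\<close> that swaps \<open>q\<close> and \<open>q'\<close>: with
  \<open>\<delta> = q\<^sup>T U U\<^sup>T q - q'\<^sup>T U U\<^sup>T q'\<close>, the map \<open>U \<mapsto> R U\<close> negates \<delta> and multiplies the
  density by \<open>exp (- (l - l') \<delta>)\<close>.\<close>

lemma bingham_proj_mean_quadform_gap:
  fixes A :: "real^'n^'n"
  assumes sym: "transpose A = A" and q: "norm q = 1" "norm q' = 1" "inner q q' = 0"
    and e: "A *v q = l *\<^sub>R q" "A *v q' = l' *\<^sub>R q'"
  defines "\<delta> \<equiv> \<lambda>U. proj_quadform q U - proj_quadform q' U"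
  shows "2 * (inner q (bingham_proj_mean \<mu> A *v q) - inner q' (bingham_proj_mean \<mu> A *v q')) =
    (\<integral>U. bingham_density \<mu> A U * ((1 - exp (- (l - l') * \<delta> U)) * \<delta> U) \<partial>\<mu>)"
proof -
  let ?b = "bingham_density \<mu> A"
  define R where "R = householder (q - q')"
  have "q \<noteq> q'"
    using q by auto
  have Rq: "R *v q = q'" "R *v q' = q"
    unfolding R_def using householder_swap[OF q(1,2)] householder_swap[OF q(2,1)]
      householder_neg[of "q - q'"] \<open>q \<noteq> q'\<close> by simp_all
  have \<delta>R: "\<delta> (R ** U) = - \<delta> U" for U
    by (simp add: \<delta>_def proj_quadform_matrix_mult R_def transpose_householder Rq[unfolded R_def])
  have bR: "?b (R ** U) = ?b U * exp (- (l - l') * \<delta> U)" for U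
    using bingham_density_householder_swap[OF sym q e, of U] by (simp add: \<delta>_def R_def)
  define f where "f U = ?b U * \<delta> U" for U
  define h where "h U = ?b U * exp (- (l - l') * \<delta> U) * \<delta> U" for U
  have cont: "continuous_on UNIV f" "continuous_on UNIV h"
    unfolding f_def h_def \<delta>_def
    by (intro continuous_intros continuous_on_bingham_density continuous_on_proj_quadform)+
  have "(\<integral>U. f U \<partial>\<mu>) = (\<integral>U. f (R ** U) \<partial>\<mu>)"
    unfolding R_def using \<open>q \<noteq> q'\<close>
    by (intro integral_orthogonal_invariant[symmetric] orthogonal_matrix_householder cont) simp
  also have "\<dots> = (\<integral>U. - h U \<partial>\<mu>)"
    by (simp only: f_def h_def \<delta>R bR) simp
  also have "\<dots> = - (\<integral>U. h U \<partial>\<mu>)"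
    by simp
  finally have fh: "(\<integral>U. f U \<partial>\<mu>) = - (\<integral>U. h U \<partial>\<mu>)" .
  have "inner q (bingham_proj_mean \<mu> A *v q) - inner q' (bingham_proj_mean \<mu> A *v q') =
      (\<integral>U. ?b U * proj_quadform q U - ?b U * proj_quadform q' U \<partial>\<mu>)"
    unfolding quadform_bingham_proj_mean
    by (intro Bochner_Integration.integral_diff[symmetric] integrable_continuous continuous_intros
        continuous_on_bingham_density continuous_on_proj_quadform)
  also have "\<dots> = (\<integral>U. f U \<partial>\<mu>)"
    by (simp add: f_def \<delta>_def right_diff_distrib)
  finally have "2 * (inner q (bingham_proj_mean \<mu> A *v q) - inner q' (bingham_proj_mean \<mu> A *v q')) =
      (\<integral>U. f U \<partial>\<mu>) - (\<integral>U. h U \<partial>\<mu>)"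
    using fh by simp
  also have "\<dots> = (\<integral>U. f U - h U \<partial>\<mu>)"
    by (intro Bochner_Integration.integral_diff[symmetric] integrable_continuous cont)
  also have "\<dots> = (\<integral>U. ?b U * ((1 - exp (- (l - l') * \<delta> U)) * \<delta> U) \<partial>\<mu>)"
    by (simp add: f_def h_def algebra_simps)
  finally show ?thesis .
qed

lemma bingham_proj_mean_quadform_mono:
  fixes A :: "real^'n^'n"
  assumes sym: "transpose A = A" and q: "norm q = 1" "norm q' = 1" "inner q q' = 0"
    and e: "A *v q = l *\<^sub>R q" "A *v q' = l' *\<^sub>R q'" and ll: "l' \<le> l"
  shows "inner q' (bingham_proj_mean \<mu> A *v q') \<le> inner q (bingham_proj_mean \<mu> A *v q)"
    and "l' < l \<Longrightarrow> \<not> (AE U in \<mu>. proj_quadform q U = proj_quadform q' U) \<Longrightarrow>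
      inner q' (bingham_proj_mean \<mu> A *v q') < inner q (bingham_proj_mean \<mu> A *v q)"
proof -
  define \<delta> where "\<delta> U = proj_quadform q U - proj_quadform q' U" for U :: "real^'p^'n"
  define g where "g U = bingham_density \<mu> A U * ((1 - exp (- (l - l') * \<delta> U)) * \<delta> U)" for U
  have gap: "2 * (inner q (bingham_proj_mean \<mu> A *v q) - inner q' (bingham_proj_mean \<mu> A *v q')) =
      (\<integral>U. g U \<partial>\<mu>)"
    unfolding g_def \<delta>_def by (rule bingham_proj_mean_quadform_gap[OF sym q e])
  have g_nonneg: "g U \<ge> 0" for U
    unfolding g_def using ll bingham_density_pos[of A U] one_minus_exp_mult_nonneg[of "l - l'" "\<delta> U"]
    by simp
  then have g_integral_nonneg: "(\<integral>U. g U \<partial>\<mu>) \<ge> 0"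
    by (simp add: integral_nonneg)
  then show "inner q' (bingham_proj_mean \<mu> A *v q') \<le> inner q (bingham_proj_mean \<mu> A *v q)"
    using gap by simp
  assume "l' < l" and nondegenerate: "\<not> (AE U in \<mu>. proj_quadform q U = proj_quadform q' U)"
  have eq_if_zero: "proj_quadform q U = proj_quadform q' U" if "g U = 0" for U
  proof (rule ccontr)
    assume "proj_quadform q U \<noteq> proj_quadform q' U"
    then have "(1 - exp (- (l - l') * \<delta> U)) * \<delta> U > 0"
      using \<open>l' < l\<close> by (intro one_minus_exp_mult_pos) (simp_all add: \<delta>_def)
    then have "g U > 0"
      unfolding g_def by (rule mult_pos_pos[OF bingham_density_pos])
    then show False
      using that by simp
  qed
  have "\<not> (AE U in \<mu>. g U = 0)"
  proof
    assume "AE U in \<mu>. g U = 0"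
    then have "AE U in \<mu>. proj_quadform q U = proj_quadform q' U"
      by (rule eventually_mono) (rule eq_if_zero)
    with nondegenerate show False
      by simp
  qed
  moreover have "integrable \<mu> g"
    unfolding g_def \<delta>_def
    by (intro integrable_continuous continuous_intros continuous_on_bingham_density
        continuous_on_proj_quadform)
  ultimately have "(\<integral>U. g U \<partial>\<mu>) \<noteq> 0"
    using integral_nonneg_eq_0_iff_AE g_nonneg by auto
  then show "inner q' (bingham_proj_mean \<mu> A *v q') < inner q (bingham_proj_mean \<mu> A *v q)"
    using gap g_integral_nonneg by simp
qed

section \<open>Non-degeneracy of the uniform distribution on the Stiefel manifold\<close>

text \<open>By invariance, an almost sure equality of the quadratic forms at one orthonormal pair
  propagates to every orthogonal pair of equal length.\<close>

lemma AE_proj_quadform_eq_transfer: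
  fixes q q' x y :: "real^'n"
  assumes q: "norm q = 1" "norm q' = 1" "inner q q' = 0"
    and ae: "AE U in \<mu>. proj_quadform q U = proj_quadform q' U"
    and xy: "x \<noteq> 0" "norm x = norm y" "inner x y = 0"
  shows "AE U in \<mu>. proj_quadform x U = proj_quadform y U"
proof -
  define r where "r = norm x"
  have r: "r > 0"
    using xy(1) by (simp add: r_def)
  have unit: "norm (x /\<^sub>R r) = 1" "norm (y /\<^sub>R r) = 1" "inner (x /\<^sub>R r) (y /\<^sub>R r) = 0"
    using r xy by (simp_all add: r_def)
  obtain Q where Q: "orthogonal_matrix Q" "Q *v q = x /\<^sub>R r" "Q *v q' = y /\<^sub>R r"
    using orthogonal_matrix_map_orthonormal_pair[OF q unit] by blast
  have QTQ: "transpose Q ** Q = mat 1"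
    using Q(1) by (simp add: orthogonal_matrix_def)
  have pullback: "transpose Q *v (x /\<^sub>R r) = q" "transpose Q *v (y /\<^sub>R r) = q'"
    unfolding Q(2,3)[symmetric] matrix_vector_mul_assoc QTQ by simp_all
  define sq where "sq a b U = (proj_quadform a U - proj_quadform b U)\<^sup>2" for a b and U :: "real^'p^'n"
  have cont: "continuous_on UNIV (sq a b)" for a b
    unfolding sq_def by (intro continuous_intros continuous_on_proj_quadform)
  have "(\<integral>U. sq (x /\<^sub>R r) (y /\<^sub>R r) U \<partial>\<mu>) = (\<integral>U. sq (x /\<^sub>R r) (y /\<^sub>R r) (Q ** U) \<partial>\<mu>)"
    by (rule integral_orthogonal_invariant[OF Q(1) cont, symmetric])
  also have "\<dots> = (\<integral>U. sq q q' U \<partial>\<mu>)"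
    by (simp only: sq_def proj_quadform_matrix_mult pullback)
  also have "\<dots> = (\<integral>U. 0 \<partial>\<mu>)"
  proof (rule integral_cong_AE[OF borel_measurable_continuous[OF cont]])
    show "AE U in \<mu>. sq q q' U = 0"
      using ae by eventually_elim (simp add: sq_def)
  qed simp
  also have "\<dots> = 0"
    by simp
  moreover have "AE U in \<mu>. 0 \<le> sq (x /\<^sub>R r) (y /\<^sub>R r) U"
    by (simp add: sq_def)
  ultimately have "AE U in \<mu>. sq (x /\<^sub>R r) (y /\<^sub>R r) U = 0"
    using integral_nonneg_eq_0_iff_AE[OF integrable_continuous[OF cont]] by simp
  then show ?thesis
    by eventually_elim (use r in \<open>simp add: sq_def proj_quadform_scaleR\<close>)
qed

lemma proj_quadform_not_AE_eq:
  fixes q q' :: "real^'n"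
  assumes pn: "CARD('p) < CARD('n)" and q: "norm q = 1" "norm q' = 1" "inner q q' = 0"
  shows "\<not> (AE U in \<mu>. proj_quadform q U = proj_quadform q' U)"
proof
  assume ae: "AE U in \<mu>. proj_quadform q U = proj_quadform q' U"
  have diag: "AE U in \<mu>. proj_quadform (axis k 1) U = proj_quadform (axis l 1) U" for k l :: 'n
  proof (cases "k = l")
    case False
    then show ?thesis
      by (intro AE_proj_quadform_eq_transfer[OF q ae]) (simp_all add: inner_axis_axis)
  qed simp
  have offdiag: "AE U in \<mu>. k \<noteq> l \<longrightarrow>
      proj_quadform (axis k 1 + axis l 1) U = proj_quadform (axis k 1 - axis l 1) U" for k l :: 'n
  proof (cases "k = l")
    case False
    then show ?thesis
      using AE_proj_quadform_eq_transfer[OF q ae axis_sum_diff_orthogonal[OF False]] by simp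
  qed simp
  have "AE U in \<mu>. U \<in> stiefel \<and>
      (\<forall>k l. proj_quadform (axis k 1) U = proj_quadform (axis l 1) U) \<and>
      (\<forall>k l. k \<noteq> l \<longrightarrow> proj_quadform (axis k 1 + axis l 1) U = proj_quadform (axis k 1 - axis l 1) U)"
    using AE_stiefel diag offdiag by (simp add: AE_all_countable)
  then have "\<exists>U :: real^'p^'n. U \<in> stiefel \<and>
      (\<forall>k l. proj_quadform (axis k 1) U = proj_quadform (axis l 1) U) \<and>
      (\<forall>k l. k \<noteq> l \<longrightarrow> proj_quadform (axis k 1 + axis l 1) U = proj_quadform (axis k 1 - axis l 1) U)"
    by (rule AE_imp_ex)
  then show False
    using stiefel_axis_proj_quadforms_not_all_eq[OF _ pn] by blast
qed

theorem top_eigvecs_bingham_proj_mean_iff: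
  fixes A :: "real^'n^'n"
  assumes pn: "CARD('p) < CARD('n)" and sym: "transpose A = A"
  shows "top_eigvecs (bingham_proj_mean \<mu> A) V \<longleftrightarrow> top_eigvecs A V"
proof (rule top_eigvecs_iff_if_same_order[OF sym])
  show "\<exists>c. bingham_proj_mean \<mu> A *v x = c *\<^sub>R x" if "x \<noteq> 0" "A *v x = l *\<^sub>R x" for x l
    by (rule bingham_proj_mean_eigvec[OF sym that])
  fix q q' :: "real^'n" and l l'
  assume q: "norm q = 1" "norm q' = 1" "inner q q' = 0" and e: "A *v q = l *\<^sub>R q" "A *v q' = l' *\<^sub>R q'"
  have q': "norm q' = 1" "norm q = 1" "inner q' q = 0"
    using q by (simp_all add: inner_commute)
  show "l \<le> l' \<longleftrightarrow> inner q (bingham_proj_mean \<mu> A *v q) \<le> inner q' (bingham_proj_mean \<mu> A *v q')"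
  proof
    assume "l \<le> l'"
    then show "inner q (bingham_proj_mean \<mu> A *v q) \<le> inner q' (bingham_proj_mean \<mu> A *v q')"
      by (rule bingham_proj_mean_quadform_mono(1)[OF sym q' e(2,1)])
  next
    assume le: "inner q (bingham_proj_mean \<mu> A *v q) \<le> inner q' (bingham_proj_mean \<mu> A *v q')"
    show "l \<le> l'"
    proof (rule ccontr)
      assume "\<not> l \<le> l'"
      then show False
        using bingham_proj_mean_quadform_mono(2)[OF sym q e _ _ proj_quadform_not_AE_eq[OF pn q]] le
        by simp
    qed
  qed
qed

end

theorem mainTheorem2:
  fixes \<mu> :: "(real^'p^'n) measure"
    and Ubar :: "real^'p^'n"
    and Y :: "real^'k^'n"
    and \<kappa> \<sigma> :: real
  assumes "CARD('p) < CARD('n)"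
    and "stiefel_uniform \<mu>"
    and "\<kappa> > 0"
    and "transpose Ubar ** Ubar = mat 1"
    and "\<sigma> > 0"
  defines "prior \<equiv> bingham_density \<mu> (\<kappa> *\<^sub>R (Ubar ** transpose Ubar))"
    and "A \<equiv> \<kappa> *\<^sub>R (Ubar ** transpose Ubar) + (1 / (2 * \<sigma>\<^sup>2)) *\<^sub>R (Y ** transpose Y)"
  shows "(\<forall>U \<in> stiefel. posterior_density \<mu> prior \<sigma> Y U = bingham_density \<mu> A U)
       \<and> (\<forall>V::real^'p^'n. top_eigvecs (posterior_mean_proj \<mu> prior \<sigma> Y) V \<longleftrightarrow> top_eigvecs A V)"
proof -
  interpret stiefel_haar \<mu>
    by unfold_locales (rule assms(2))
  have sym: "transpose A = A"
    unfolding A_def by (simp add: transpose_add transpose_scalar matrix_transpose_mul)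
  have mean: "posterior_mean_proj \<mu> prior \<sigma> Y = bingham_proj_mean \<mu> A"
    unfolding prior_def A_def by (rule posterior_mean_proj_bingham[OF \<open>\<sigma> > 0\<close>])
  show ?thesis
  proof (intro conjI ballI allI)
    show "posterior_density \<mu> prior \<sigma> Y U = bingham_density \<mu> A U" if "U \<in> stiefel" for U
      unfolding prior_def A_def by (rule posterior_density_bingham[OF \<open>\<sigma> > 0\<close> that])
    show "top_eigvecs (posterior_mean_proj \<mu> prior \<sigma> Y) V \<longleftrightarrow> top_eigvecs A V" for V
      unfolding mean by (rule top_eigvecs_bingham_proj_mean_iff[OF assms(1) sym])
  qed
qed

end
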